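(* In any finite ELP, if $\mu$ is an optimal policy, then the Lagrangian $\mathcal L_\mu$ with conjugate policy $\mu$ satisfies $$\min_{Q\in\mathcal Q}\max_{\lambda\ge0}\mathcal L_\mu(Q,\lambda)=\max_{\lambda\ge0}\min_{Q\in\mathcal Q}\mathcal L_\mu(Q,\lambda)=J(\mu).$$
   Context: A finite ELP is $(\mathcal S,\mathcal A,P,R,\rho)$ with finite $\mathcal S,\mathcal A$, reward $R:\mathcal S\to\mathbb R$, transitions $P(s'|s,a)$, distribution $\rho$, and nonempty terminal set $\mathcal S_\bot$. Under a policy $\pi$, $S_0$ is a fixed terminal state, $A_t\sim\pi(\cdot|S_t)$, $S_{t+1}\sim P(\cdot|S_t,A_t)$, and $T=\inf\{t\ge1:S_t\in\mathcal S_\bot\}$. ELP conditions: $\mathbb E_\pi[T]<\infty$ for every $\pi$; $P(s'|s,a)=\rho(s')$ for all $s\in\mathcal S_\bot$, all $a,s'$; every state is reachable under some policy. $J(\pi)=\mathbb E_\pi[\sum_{t=1}^TR(S_t)]$; $\mu$ optimal means $J(\mu)=\max_\pi J(\pi)$. $\mathcal Q$ = all functions $\mathcal S\times\mathcal A\to\mathbb R$; $\lambda\ge0$ ranges over functions $\mathcal S\times\mathcal A\to[0,\infty)$. $\mathcal BQ(s,a)=\sum_{s'}P(s'|s,a)\big(R(s')+\mathbf 1[s'\notin\mathcal S_\bot]\max_{a'}Q(s',a')\big)$. $\mathcal L_\pi(Q,\lambda)=\mathbb E_\pi[Q(S_T,A_T)]+\sum_{s,a}\lambda(s,a)(\mathcal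 BQ(s,a)-Q(s,a))$ with $A_T\sim\pi(\cdot|S_T)$. *)

theory Defs
  imports "HOL-Analysis.Analysis"
begin

text \<open>P s a s' is the transition probability P(s'|s,a), R s is the reward,
  rho the restart distribution, Sbot the terminal set.
  A (stationary, stochastic) policy pol s a is pol(a|s).
  An episode is recorded as the list [(S_1,A_1),...,(S_T,A_T)];
  since S_0 is terminal, S_1 is distributed according to rho.\<close>

definition is_policy :: "('s::finite \<Rightarrow> 'a::finite \<Rightarrow> real) \<Rightarrow> bool" where
  "is_policy pol \<longleftrightarrow> (\<forall>s a. 0 \<le> pol s a) \<and> (\<forall>s. (\<Sum>a\<in>UNIV. pol s a) = 1)"

fun steps_prob :: "('s \<Rightarrow> 'a \<Rightarrow> 's \<Rightarrow> real) \<Rightarrow> ('s \<Rightarrow> 'a \<Rightarrow> real) \<Rightarrow> ('s \<times> 'a) list \<Rightarrow> real" where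
  "steps_prob P pol [] = 1"
| "steps_prob P pol [x] = 1"
| "steps_prob P pol ((s,a) # (s',a') # xs) = P s a s' * pol s' a' * steps_prob P pol ((s',a') # xs)"

text \<open>Probability that the first length(xs) state-action pairs of the process are xs.\<close>
fun traj_prob :: "('s \<Rightarrow> 'a \<Rightarrow> 's \<Rightarrow> real) \<Rightarrow> ('s \<Rightarrow> real) \<Rightarrow> ('s \<Rightarrow> 'a \<Rightarrow> real) \<Rightarrow> ('s \<times> 'a) list \<Rightarrow> real" where
  "traj_prob P rho pol [] = 0"
| "traj_prob P rho pol ((s,a) # xs) = rho s * pol s a * steps_prob P pol ((s,a) # xs)"

text \<open>xs is a full episode: all states but the last are non-terminal, the last one is terminal
  (so length xs = T).\<close>
definition stopped :: "'s set \<Rightarrow> ('s \<times> 'a) list \<Rightarrow> bool" where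
  "stopped Sbot xs \<longleftrightarrow> xs \<noteq> [] \<and> fst (last xs) \<in> Sbot \<and> (\<forall>x\<in>set (butlast xs). fst x \<notin> Sbot)"

definition hit_prob :: "('s::finite \<Rightarrow> 'a::finite \<Rightarrow> 's \<Rightarrow> real) \<Rightarrow> ('s \<Rightarrow> real) \<Rightarrow> 's set \<Rightarrow> ('s \<Rightarrow> 'a \<Rightarrow> real) \<Rightarrow> nat \<Rightarrow> real" where
  "hit_prob P rho Sbot pol t = (\<Sum>xs | length xs = t \<and> stopped Sbot xs. traj_prob P rho pol xs)"

definition episode_exp :: "('s::finite \<Rightarrow> 'a::finite \<Rightarrow> 's \<Rightarrow> real) \<Rightarrow> ('s \<Rightarrow> real) \<Rightarrow> 's set \<Rightarrow> ('s \<Rightarrow> 'a \<Rightarrow> real)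
    \<Rightarrow> (('s \<times> 'a) list \<Rightarrow> real) \<Rightarrow> real" where
  "episode_exp P rho Sbot pol f =
     (\<Sum>t. \<Sum>xs | length xs = t \<and> stopped Sbot xs. traj_prob P rho pol xs * f xs)"

definition finite_ELP :: "('s::finite \<Rightarrow> 'a::finite \<Rightarrow> 's \<Rightarrow> real) \<Rightarrow> ('s \<Rightarrow> real) \<Rightarrow> ('s \<Rightarrow> real) \<Rightarrow> 's set \<Rightarrow> bool" where
  "finite_ELP P R rho Sbot \<longleftrightarrow>
     (\<forall>s a s'. 0 \<le> P s a s') \<and> (\<forall>s a. (\<Sum>s'\<in>UNIV. P s a s') = 1) \<and>
     (\<forall>s. 0 \<le> rho s) \<and> (\<Sum>s\<in>UNIV. rho s) = 1 \<and>
     Sbot \<noteq> {} \<and>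
     \<comment> \<open>E_pi[T] < infinity for every policy: T finite a.s. and sum of t Pr(T=t) finite\<close>
     (\<forall>pol. is_policy pol \<longrightarrow>
         (hit_prob P rho Sbot pol sums 1) \<and> summable (\<lambda>t. real t * hit_prob P rho Sbot pol t)) \<and>
     \<comment> \<open>terminal states restart according to rho\<close>
     (\<forall>s\<in>Sbot. \<forall>a s'. P s a s' = rho s') \<and>
     \<comment> \<open>every state is reachable under some policy\<close>
     (\<forall>s. \<exists>pol. is_policy pol \<and> (\<exists>xs. xs \<noteq> [] \<and> fst (last xs) = s \<and>
          (\<forall>x\<in>set (butlast xs). fst x \<notin> Sbot) \<and> traj_prob P rho pol xs > 0))"

definition J :: "('s::finite \<Rightarrow> 'a::finite \<Rightarrow> 's \<Rightarrow> real) \<Rightarrow> ('s \<Rightarrow> real) \<Rightarrow> ('s \<Rightarrow> real) \<Rightarrow> 's set \<Rightarrow> ('s \<Rightarrow> 'a \<Rightarrow> real) \<Rightarrow> real" where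
  "J P R rho Sbot pol = episode_exp P rho Sbot pol (\<lambda>xs. \<Sum>x\<leftarrow>xs. R (fst x))"

definition is_optimal :: "('s::finite \<Rightarrow> 'a::finite \<Rightarrow> 's \<Rightarrow> real) \<Rightarrow> ('s \<Rightarrow> real) \<Rightarrow> ('s \<Rightarrow> real) \<Rightarrow> 's set \<Rightarrow> ('s \<Rightarrow> 'a \<Rightarrow> real) \<Rightarrow> bool" where
  "is_optimal P R rho Sbot mu \<longleftrightarrow> is_policy mu \<and> (\<forall>pol. is_policy pol \<longrightarrow> J P R rho Sbot pol \<le> J P R rho Sbot mu)"

definition bellman :: "('s::finite \<Rightarrow> 'a::finite \<Rightarrow> 's \<Rightarrow> real) \<Rightarrow> ('s \<Rightarrow> real) \<Rightarrow> 's set \<Rightarrow> ('s \<Rightarrow> 'a \<Rightarrow> real) \<Rightarrow> 's \<Rightarrow> 'a \<Rightarrow> real" where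
  "bellman P R Sbot Q s a =
     (\<Sum>s'\<in>UNIV. P s a s' * (R s' + (if s' \<notin> Sbot then Max (range (Q s')) else 0)))"

definition lagrangian :: "('s::finite \<Rightarrow> 'a::finite \<Rightarrow> 's \<Rightarrow> real) \<Rightarrow> ('s \<Rightarrow> real) \<Rightarrow> ('s \<Rightarrow> real) \<Rightarrow> 's set
    \<Rightarrow> ('s \<Rightarrow> 'a \<Rightarrow> real) \<Rightarrow> ('s \<Rightarrow> 'a \<Rightarrow> real) \<Rightarrow> ('s \<Rightarrow> 'a \<Rightarrow> real) \<Rightarrow> real" where
  "lagrangian P R rho Sbot pol Q lam =
     episode_exp P rho Sbot pol (\<lambda>xs. Q (fst (last xs)) (snd (last xs)))
     + (\<Sum>s\<in>UNIV. \<Sum>a\<in>UNIV. lam s a * (bellman P R Sbot Q s a - Q s a))"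

definition nonneg_multipliers :: "('s \<Rightarrow> 'a \<Rightarrow> real) set" where
  "nonneg_multipliers = {lam. \<forall>s a. 0 \<le> lam s a}"

end

theory Submission
  imports Defs
begin

text \<open>For a policy sig let lam_sig(s,a) = sum_n Pr(S_{n+1} = s, A_{n+1} = a, T > n) be its occupancy
  measure and T_sig Q = r + P_sig Q its Bellman operator, where P_sig is the transition kernel
  killed on the terminal states. Splitting the episode at every step gives, for every Q, the identity
  E_sig[Q(S_T,A_T)] + sum lam_sig (T_sig Q - Q) = J(sig); as T_mu Q \<le> B Q, this yields
  J(mu) \<le> L_mu(Q, lam_mu) for all Q. Conversely, a deterministic policy maximising the sum of its
  action values is greedy for them (policy improvement), so its action value function Q* is a fixed
  point of B. Moreover Q* is constant on the terminal states, where it equals the return of that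
  policy, which is at most J(mu); hence L_mu(Q*, lam) = E_mu[Q*(S_T,A_T)] \<le> J(mu) for every lam,
  and (Q*, lam_mu) is a saddle point with value J(mu).

  All series converge geometrically. Since every state is reachable, the set where a nonnegative
  fixed point of P_sig attains its positive maximum would contain a closed set of non-terminal
  states entered with positive probability, contradicting E[T] < \<infinity>; so P_sig^n 1 \<rightarrow> 0 from
  every state-action pair.\<close>

lemma steps_prob_snoc:
  "xs \<noteq> [] \<Longrightarrow> steps_prob P pol (xs @ [(s',a')])
     = steps_prob P pol xs * P (fst (last xs)) (snd (last xs)) s' * pol s' a'"
  by (induction P pol xs rule: steps_prob.induct) (auto simp: algebra_simps)

lemma traj_prob_snoc:
  assumes "ys \<noteq> []"
  shows "traj_prob P rho pol (ys @ [(s',a')])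
     = traj_prob P rho pol ys * P (fst (last ys)) (snd (last ys)) s' * pol s' a'"
proof -
  obtain s a ys' where "ys = (s,a) # ys'" using assms by (metis list.exhaust prod.collapse)
  then show ?thesis using steps_prob_snoc[of "(s,a) # ys'" P pol s' a'] by (simp add: algebra_simps)
qed

lemma traj_prob_snoc_cases:
  "traj_prob P rho pol (ys @ [(s',a')])
     = (if ys = [] then rho s' else traj_prob P rho pol ys * P (fst (last ys)) (snd (last ys)) s')
       * pol s' a'"
  by (cases "ys = []") (simp_all add: traj_prob_snoc)

lemma traj_prob_nonneg:
  assumes "\<And>s a s'. 0 \<le> P s a s'" "\<And>s. 0 \<le> rho s" "\<And>s a. 0 \<le> pol s a"
  shows "0 \<le> traj_prob P rho pol xs"
proof (induction xs rule: rev_induct)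
  case (snoc x xs)
  then show ?case using assms by (cases x) (simp add: traj_prob_snoc_cases)
qed simp

lemma traj_prob_cong:
  assumes "\<And>s a. (s,a) \<in> set xs \<Longrightarrow> pol s a = pol' s a"
  shows "traj_prob P rho pol xs = traj_prob P rho pol' xs"
  using assms
proof (induction xs rule: rev_induct)
  case (snoc x xs)
  then show ?case by (cases x) (simp add: traj_prob_snoc_cases)
qed simp

lemma is_policy_nonneg: "is_policy pol \<Longrightarrow> 0 \<le> pol s a"
  by (simp add: is_policy_def)

lemma is_policy_sum: "is_policy pol \<Longrightarrow> (\<Sum>a\<in>UNIV. pol s a) = 1"
  by (simp add: is_policy_def)

lemma is_policy_ex_pos: "is_policy pol \<Longrightarrow> \<exists>a. 0 < pol s a"
proof (rule ccontr)
  assume pol: "is_policy pol" and "\<nexists>a. 0 < pol s a"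
  then have "\<And>a. pol s a = 0" using is_policy_nonneg[OF pol, of s] by (meson antisym not_less)
  then show False using is_policy_sum[OF pol, of s] by simp
qed

lemma is_policy_sum_collapse:
  "is_policy pol \<Longrightarrow> (\<Sum>a\<in>UNIV. F * pol s a) = F"
  by (simp add: sum_distrib_left[symmetric] is_policy_sum)

definition det_policy :: "('s \<Rightarrow> 'a) \<Rightarrow> 's \<Rightarrow> 'a \<Rightarrow> real" where
  "det_policy phi s a = (if a = phi s then 1 else 0)"

lemma is_policy_det_policy: "is_policy (det_policy phi)"
  unfolding is_policy_def det_policy_def by simp

lemma finite_lists_length_eq_filter:
  "finite {xs :: ('b::finite) list. length xs = m \<and> Q xs}"
  by (rule rev_finite_subset[OF finite_lists_length_eq[of UNIV m]]) auto

lemma sum_UNIV_Compl_split: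
  fixes f :: "'x::finite \<Rightarrow> 'b::comm_monoid_add"
  shows "(\<Sum>x\<in>UNIV. f x) = (\<Sum>x\<in>A. f x) + (\<Sum>x\<in>-A. f x)"
proof -
  have "UNIV = A \<union> -A" by auto
  then show ?thesis by (metis sum.union_disjoint finite Compl_disjoint)
qed

lemma sum_swap_outer:
  "(\<Sum>z\<in>C. \<Sum>x\<in>A. \<Sum>y\<in>B. f z x y) = (\<Sum>x\<in>A. \<Sum>y\<in>B. \<Sum>z\<in>C. f z x y)"
  by (subst sum.swap) (intro sum.cong refl, rule sum.swap)

lemma bounded_finite_fun:
  fixes f :: "'s::finite \<Rightarrow> 'a::finite \<Rightarrow> real"
  obtains B where "\<And>s a. \<bar>f s a\<bar> \<le> B"
proof
  fix s a
  have "\<bar>f s a\<bar> \<le> (\<Sum>a\<in>UNIV. \<bar>f s a\<bar>)" by (rule member_le_sum) auto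
  also have "\<dots> \<le> (\<Sum>s\<in>UNIV. \<Sum>a\<in>UNIV. \<bar>f s a\<bar>)" by (rule member_le_sum) (auto intro: sum_nonneg)
  finally show "\<bar>f s a\<bar> \<le> (\<Sum>s\<in>UNIV. \<Sum>a\<in>UNIV. \<bar>f s a\<bar>)" .
qed

lemma geometric_decay:
  fixes x :: "nat \<Rightarrow> real"
  assumes q: "0 < q" "q < 1" and bound: "\<And>n. \<bar>x n\<bar> \<le> C * q ^ n"
  shows "summable x" "(\<lambda>n. real n * x n) \<longlonglongrightarrow> 0"
proof -
  have "summable (\<lambda>n. C * q ^ n)" using q by (intro summable_mult summable_geometric) simp
  then show "summable x" by (rule summable_comparison_test[rotated]) (use bound in auto)
  have "(\<lambda>n. C * (real n * q ^ n)) \<longlonglongrightarrow> C * 0"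
    using q by (intro tendsto_intros powser_times_n_limit_0) simp
  then have lim: "(\<lambda>n. C * (real n * q ^ n)) \<longlonglongrightarrow> 0" by simp
  have "norm (real n * x n) \<le> C * (real n * q ^ n)" for n
  proof -
    have "norm (real n * x n) = real n * \<bar>x n\<bar>" by (simp add: abs_mult)
    also have "\<dots> \<le> real n * (C * q ^ n)" by (rule mult_left_mono[OF bound]) simp
    finally show ?thesis by (simp add: algebra_simps)
  qed
  then show "(\<lambda>n. real n * x n) \<longlonglongrightarrow> 0"
    by (intro Lim_null_comparison[OF _ lim] always_eventually) simp
qed

lemma finite_fun_argmax:
  fixes h :: "'s::finite \<Rightarrow> 'a::finite \<Rightarrow> real"
  obtains s0 a0 where "\<And>s a. h s a \<le> h s0 a0"
proof -
  have "Max (range (case_prod h)) \<in> range (case_prod h)" by (rule Max_in) auto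
  then obtain p where p: "Max (range (case_prod h)) = case_prod h p" by blast
  obtain s0 a0 where "p = (s0, a0)" by force
  with p have "Max (range (case_prod h)) = h s0 a0" by simp
  moreover have "h s a \<le> Max (range (case_prod h))" for s a
    by (rule Max_ge) (auto intro: rev_image_eqI[of "(s,a)"])
  ultimately show ?thesis using that by metis
qed

lemma set_butlast_last: "xs \<noteq> [] \<Longrightarrow> set xs = insert (last xs) (set (butlast xs))"
  by (induction xs) auto

lemma sum_paths_by_last:
  fixes X :: "('s::finite \<times> 'a::finite) list set"
  assumes "finite X" and last: "\<And>s a. {xs\<in>X. last xs = (s,a)} = (if s \<in> S then Y s a else {})"
  shows "(\<Sum>xs\<in>X. h xs) = (\<Sum>s\<in>S. \<Sum>a\<in>UNIV. \<Sum>xs\<in>Y s a. h xs)"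
proof -
  have "(\<Sum>xs\<in>X. h xs) = (\<Sum>p\<in>UNIV. \<Sum>xs\<in>{xs\<in>X. last xs = p}. h xs)"
    by (rule sum.group[symmetric]) (auto simp: assms)
  also have "\<dots> = (\<Sum>s\<in>UNIV. \<Sum>a\<in>UNIV. \<Sum>xs\<in>{xs\<in>X. last xs = (s,a)}. h xs)"
    unfolding UNIV_Times_UNIV[symmetric] sum.cartesian_product by simp
  also have "\<dots> = (\<Sum>s\<in>UNIV. if s \<in> S then \<Sum>a\<in>UNIV. \<Sum>xs\<in>Y s a. h xs else 0)"
    by (intro sum.cong refl) (simp add: last)
  finally show ?thesis by (simp add: sum.If_cases)
qed

section \<open>Occupation measures\<close>

locale finite_elp =
  fixes P :: "'s::finite \<Rightarrow> 'a::finite \<Rightarrow> 's \<Rightarrow> real" and R :: "'s \<Rightarrow> real"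
    and rho :: "'s \<Rightarrow> real" and Sbot :: "'s set"
  assumes elp: "finite_ELP P R rho Sbot"
begin

lemma P_nonneg: "0 \<le> P s a s'" using elp by (simp add: finite_ELP_def)
lemma P_sum: "(\<Sum>s'\<in>UNIV. P s a s') = 1" using elp by (simp add: finite_ELP_def)
lemma rho_nonneg: "0 \<le> rho s" using elp by (simp add: finite_ELP_def)
lemma rho_sum: "(\<Sum>s\<in>UNIV. rho s) = 1" using elp by (simp add: finite_ELP_def)
lemma Sbot_nonempty: "Sbot \<noteq> {}" using elp by (simp add: finite_ELP_def)
lemma hit_prob_sums: "is_policy pol \<Longrightarrow> hit_prob P rho Sbot pol sums 1"
  using elp by (simp add: finite_ELP_def)
lemma restart: "s \<in> Sbot \<Longrightarrow> P s a s' = rho s'" using elp by (simp add: finite_ELP_def)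
lemma reachable: "\<exists>pol. is_policy pol \<and> (\<exists>xs. xs \<noteq> [] \<and> fst (last xs) = s \<and>
    (\<forall>x\<in>set (butlast xs). fst x \<notin> Sbot) \<and> 0 < traj_prob P rho pol xs)"
  using elp by (simp add: finite_ELP_def)

lemma traj_prob_ge_0: "is_policy pol \<Longrightarrow> 0 \<le> traj_prob P rho pol xs"
  by (rule traj_prob_nonneg) (auto simp: P_nonneg rho_nonneg is_policy_nonneg)

definition live_paths :: "nat \<Rightarrow> 's \<Rightarrow> 'a \<Rightarrow> ('s \<times> 'a) list set" where
  "live_paths m s a = {xs. length xs = m \<and> (\<forall>x\<in>set (butlast xs). fst x \<notin> Sbot) \<and> last xs = (s,a)}"

definition nonterminal_paths :: "nat \<Rightarrow> ('s \<times> 'a) list set" where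
  "nonterminal_paths n = {ys. length ys = Suc n \<and> (\<forall>x\<in>set ys. fst x \<notin> Sbot)}"

lemma finite_live_paths: "finite (live_paths m s a)"
  unfolding live_paths_def by (rule finite_lists_length_eq_filter)

lemma live_paths_1: "live_paths (Suc 0) s a = {[(s,a)]}"
  unfolding live_paths_def by (auto simp: length_Suc_conv)

lemma live_paths_Suc_Suc:
  "live_paths (Suc (Suc n)) s' a' = (\<lambda>ys. ys @ [(s',a')]) ` nonterminal_paths n"
proof safe
  fix xs assume xs: "xs \<in> live_paths (Suc (Suc n)) s' a'"
  then have "xs \<noteq> []" "last xs = (s',a')" by (auto simp: live_paths_def)
  then have "xs = butlast xs @ [(s',a')]" by (metis append_butlast_last_id)
  moreover have "butlast xs \<in> nonterminal_paths n"
    using xs by (auto simp: live_paths_def nonterminal_paths_def)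
  ultimately show "xs \<in> (\<lambda>ys. ys @ [(s',a')]) ` nonterminal_paths n" by blast
qed (auto simp: nonterminal_paths_def live_paths_def)

lemma sum_nonterminal_paths:
  "(\<Sum>ys\<in>nonterminal_paths n. h ys) = (\<Sum>s\<in>-Sbot. \<Sum>a\<in>UNIV. \<Sum>ys\<in>live_paths (Suc n) s a. h ys)"
proof (rule sum_paths_by_last)
  show "finite (nonterminal_paths n)"
    unfolding nonterminal_paths_def by (rule finite_lists_length_eq_filter)
  fix s a
  show "{xs \<in> nonterminal_paths n. last xs = (s,a)}
      = (if s \<in> - Sbot then live_paths (Suc n) s a else {})"
  proof (cases "s \<in> Sbot")
    case True
    have "last xs \<noteq> (s,a)" if "xs \<in> nonterminal_paths n" for xs
    proof -
      have "xs \<noteq> []" "\<forall>x\<in>set xs. fst x \<notin> Sbot" using that by (auto simp: nonterminal_paths_def)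
      then show ?thesis using True by (metis fst_conv last_in_set)
    qed
    then show ?thesis using True by auto
  next
    case False
    have "xs \<in> nonterminal_paths n" if "xs \<in> live_paths (Suc n) s a" for xs
    proof -
      have "xs \<noteq> []" using that by (auto simp: live_paths_def)
      then show ?thesis using that False set_butlast_last[of xs]
        by (auto simp: live_paths_def nonterminal_paths_def)
    qed
    then show ?thesis using False
      by (auto simp: nonterminal_paths_def live_paths_def dest: in_set_butlastD)
  qed
qed

lemma sum_stopped_paths:
  "(\<Sum>xs | length xs = Suc n \<and> stopped Sbot xs. h xs) = (\<Sum>s\<in>Sbot. \<Sum>a\<in>UNIV. \<Sum>xs\<in>live_paths (Suc n) s a. h xs)"
  by (rule sum_paths_by_last[OF finite_lists_length_eq_filter])
     (auto simp: stopped_def live_paths_def)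

text \<open>The index n refers to the (n+1)-st state-action pair, i.e. to (S_{n+1}, A_{n+1}).\<close>

definition path_sum :: "('s \<Rightarrow> 'a \<Rightarrow> real) \<Rightarrow> (('s \<times> 'a) list \<Rightarrow> real) \<Rightarrow> nat \<Rightarrow> 's \<Rightarrow> 'a \<Rightarrow> real" where
  "path_sum pol g n s a = (\<Sum>xs\<in>live_paths (Suc n) s a. traj_prob P rho pol xs * g xs)"

lemma path_sum_0: "path_sum pol g 0 s a = rho s * pol s a * g [(s,a)]"
  by (simp add: path_sum_def live_paths_1)

lemma path_sum_Suc: "path_sum pol g (Suc n) s' a' = (\<Sum>s\<in>-Sbot. \<Sum>a\<in>UNIV.
    \<Sum>ys\<in>live_paths (Suc n) s a. traj_prob P rho pol ys * P s a s' * pol s' a' * g (ys @ [(s',a')]))"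
proof -
  have "path_sum pol g (Suc n) s' a'
      = (\<Sum>ys\<in>nonterminal_paths n. traj_prob P rho pol (ys @ [(s',a')]) * g (ys @ [(s',a')]))"
    unfolding path_sum_def live_paths_Suc_Suc by (subst sum.reindex) (auto simp: inj_on_def)
  also have "\<dots> = (\<Sum>s\<in>-Sbot. \<Sum>a\<in>UNIV. \<Sum>ys\<in>live_paths (Suc n) s a.
      traj_prob P rho pol (ys @ [(s',a')]) * g (ys @ [(s',a')]))"
    by (rule sum_nonterminal_paths)
  also have "\<dots> = (\<Sum>s\<in>-Sbot. \<Sum>a\<in>UNIV. \<Sum>ys\<in>live_paths (Suc n) s a.
      traj_prob P rho pol ys * P s a s' * pol s' a' * g (ys @ [(s',a')]))"
  proof (intro sum.cong refl)
    fix s a ys assume "ys \<in> live_paths (Suc n) s a"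
    then have "ys \<noteq> []" "last ys = (s,a)" by (auto simp: live_paths_def)
    then show "traj_prob P rho pol (ys @ [(s',a')]) * g (ys @ [(s',a')])
        = traj_prob P rho pol ys * P s a s' * pol s' a' * g (ys @ [(s',a')])"
      by (simp add: traj_prob_snoc)
  qed
  finally show ?thesis .
qed

lemma episode_exp_eqI:
  assumes "(\<lambda>n. \<Sum>s\<in>Sbot. \<Sum>a\<in>UNIV. path_sum pol f n s a) sums x"
  shows "episode_exp P rho Sbot pol f = x"
proof -
  let ?g = "\<lambda>t. \<Sum>xs | length xs = t \<and> stopped Sbot xs. traj_prob P rho pol xs * f xs"
  have "?g 0 = 0" by (simp add: stopped_def)
  moreover have "(\<lambda>n. ?g (Suc n)) sums x"
    using assms by (simp only: sum_stopped_paths path_sum_def)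
  ultimately have "?g sums x" using sums_Suc[of ?g x] by simp
  then show ?thesis unfolding episode_exp_def by (rule sums_unique[symmetric])
qed

text \<open>occ pol n s a = Pr(S_{n+1} = s, A_{n+1} = a, T > n).\<close>

definition occ :: "('s \<Rightarrow> 'a \<Rightarrow> real) \<Rightarrow> nat \<Rightarrow> 's \<Rightarrow> 'a \<Rightarrow> real" where
  "occ pol = path_sum pol (\<lambda>_. 1)"

lemma occ_0: "occ pol 0 s a = rho s * pol s a"
  by (simp add: occ_def path_sum_0)

lemma occ_Suc: "occ pol (Suc n) s' a' = (\<Sum>s\<in>-Sbot. \<Sum>a\<in>UNIV. occ pol n s a * P s a s') * pol s' a'"
  unfolding occ_def path_sum_Suc by (simp add: path_sum_def sum_distrib_right)

lemma occ_nonneg: "is_policy pol \<Longrightarrow> 0 \<le> occ pol n s a"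
  unfolding occ_def path_sum_def by (auto intro!: sum_nonneg traj_prob_ge_0)

lemma occ_eq_0_if_policy_eq_0: "pol s a = 0 \<Longrightarrow> occ pol n s a = 0"
  by (cases n) (simp_all add: occ_0 occ_Suc)

lemma traj_prob_le_occ:
  "is_policy pol \<Longrightarrow> xs \<in> live_paths (Suc n) s a \<Longrightarrow> traj_prob P rho pol xs \<le> occ pol n s a"
  unfolding occ_def path_sum_def using finite_live_paths
  by (simp add: member_le_sum traj_prob_ge_0)

definition cum_reward :: "('s \<Rightarrow> 'a \<Rightarrow> real) \<Rightarrow> nat \<Rightarrow> 's \<Rightarrow> 'a \<Rightarrow> real" where
  "cum_reward pol = path_sum pol (\<lambda>xs. \<Sum>x\<leftarrow>xs. R (fst x))"

lemma cum_reward_0: "cum_reward pol 0 s a = occ pol 0 s a * R s"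
  by (simp add: cum_reward_def occ_0 path_sum_0)

lemma cum_reward_Suc: "cum_reward pol (Suc n) s' a'
    = (\<Sum>s\<in>-Sbot. \<Sum>a\<in>UNIV. (cum_reward pol n s a + occ pol n s a * R s') * P s a s') * pol s' a'"
proof -
  have "cum_reward pol (Suc n) s' a' = (\<Sum>s\<in>-Sbot. \<Sum>a\<in>UNIV. \<Sum>ys\<in>live_paths (Suc n) s a.
      (traj_prob P rho pol ys * (\<Sum>x\<leftarrow>ys. R (fst x)) + traj_prob P rho pol ys * R s')
      * (P s a s' * pol s' a'))"
    unfolding cum_reward_def path_sum_Suc by (intro sum.cong refl) (simp add: algebra_simps)
  then show ?thesis
    unfolding cum_reward_def occ_def path_sum_def
    by (simp add: sum.distrib sum_distrib_right[symmetric]) (simp add: sum_distrib_right mult.assoc)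
qed

definition stop_mass :: "('s \<Rightarrow> 'a \<Rightarrow> real) \<Rightarrow> nat \<Rightarrow> real" where
  "stop_mass pol n = (\<Sum>s\<in>Sbot. \<Sum>a\<in>UNIV. occ pol n s a)"

definition live_mass :: "('s \<Rightarrow> 'a \<Rightarrow> real) \<Rightarrow> nat \<Rightarrow> real" where
  "live_mass pol n = (\<Sum>s\<in>-Sbot. \<Sum>a\<in>UNIV. occ pol n s a)"

definition occ_mass :: "('s \<Rightarrow> 'a \<Rightarrow> real) \<Rightarrow> nat \<Rightarrow> real" where
  "occ_mass pol n = (\<Sum>s\<in>UNIV. \<Sum>a\<in>UNIV. occ pol n s a)"

lemma occ_mass_split: "occ_mass pol n = stop_mass pol n + live_mass pol n"
  unfolding occ_mass_def stop_mass_def live_mass_def by (rule sum_UNIV_Compl_split)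

lemma stop_mass_sums: "is_policy pol \<Longrightarrow> stop_mass pol sums 1"
proof -
  assume "is_policy pol"
  then have "hit_prob P rho Sbot pol sums 1" by (rule hit_prob_sums)
  moreover have "hit_prob P rho Sbot pol 0 = 0" by (simp add: hit_prob_def stopped_def)
  ultimately have "(\<lambda>n. hit_prob P rho Sbot pol (Suc n)) sums 1"
    using sums_Suc_iff[of "hit_prob P rho Sbot pol" 1] by simp
  moreover have "hit_prob P rho Sbot pol (Suc n) = stop_mass pol n" for n
    unfolding hit_prob_def stop_mass_def occ_def path_sum_def by (simp add: sum_stopped_paths)
  ultimately show ?thesis by simp
qed

lemma occ_mass_0: "is_policy pol \<Longrightarrow> occ_mass pol 0 = 1"
  by (simp add: occ_mass_def occ_0 is_policy_sum_collapse rho_sum)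

lemma occ_mass_Suc:
  assumes pol: "is_policy pol"
  shows "occ_mass pol (Suc n) = live_mass pol n"
proof -
  have "occ_mass pol (Suc n)
      = (\<Sum>s'\<in>UNIV. (\<Sum>s\<in>-Sbot. \<Sum>a\<in>UNIV. occ pol n s a * P s a s') * (\<Sum>a'\<in>UNIV. pol s' a'))"
    by (simp add: occ_mass_def occ_Suc sum_distrib_left)
  also have "\<dots> = (\<Sum>s'\<in>UNIV. \<Sum>s\<in>-Sbot. \<Sum>a\<in>UNIV. occ pol n s a * P s a s')"
    by (simp add: is_policy_sum[OF pol])
  also have "\<dots> = (\<Sum>s\<in>-Sbot. \<Sum>a\<in>UNIV. \<Sum>s'\<in>UNIV. occ pol n s a * P s a s')"
    by (rule sum_swap_outer)
  finally show ?thesis by (simp add: sum_distrib_left[symmetric] P_sum live_mass_def)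
qed

lemma live_mass_tendsto_0: "is_policy pol \<Longrightarrow> live_mass pol \<longlonglongrightarrow> 0"
proof -
  assume pol: "is_policy pol"
  have partial: "(\<Sum>k<n. stop_mass pol k) + occ_mass pol n = 1" for n
  proof (induction n)
    case (Suc n)
    then show ?case using occ_mass_split[of pol n] occ_mass_Suc[OF pol, of n] by simp
  qed (simp add: occ_mass_0[OF pol])
  then have "occ_mass pol = (\<lambda>n. 1 - (\<Sum>k<n. stop_mass pol k))" by (auto simp: algebra_simps)
  moreover have "(\<lambda>n. 1 - (\<Sum>k<n. stop_mass pol k)) \<longlonglongrightarrow> 1 - 1"
    using stop_mass_sums[OF pol] by (intro tendsto_intros) (simp add: sums_def)
  ultimately have "occ_mass pol \<longlonglongrightarrow> 0" by simp
  then show ?thesis using LIMSEQ_Suc[of "occ_mass pol"] by (simp add: occ_mass_Suc[OF pol])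
qed

section \<open>Transience\<close>

definition trans_op :: "('s \<Rightarrow> 'a \<Rightarrow> real) \<Rightarrow> ('s \<Rightarrow> 'a \<Rightarrow> real) \<Rightarrow> 's \<Rightarrow> 'a \<Rightarrow> real" where
  "trans_op pol h s a = (\<Sum>s'\<in>-Sbot. P s a s' * (\<Sum>a'\<in>UNIV. pol s' a' * h s' a'))"

lemma occ_Suc_adjoint:
  "(\<Sum>s\<in>-Sbot. \<Sum>a\<in>UNIV. occ pol (Suc n) s a * h s a)
     = (\<Sum>s\<in>-Sbot. \<Sum>a\<in>UNIV. occ pol n s a * trans_op pol h s a)"
proof -
  have "(\<Sum>s\<in>-Sbot. \<Sum>a\<in>UNIV. occ pol (Suc n) s a * h s a)
     = (\<Sum>s'\<in>-Sbot. \<Sum>a'\<in>UNIV. \<Sum>s\<in>-Sbot. \<Sum>a\<in>UNIV. occ pol n s a * P s a s' * (pol s' a' * h s' a'))"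
    by (simp add: occ_Suc sum_distrib_right mult.assoc)
  also have "\<dots> = (\<Sum>s'\<in>-Sbot. \<Sum>s\<in>-Sbot. \<Sum>a\<in>UNIV. \<Sum>a'\<in>UNIV. occ pol n s a * P s a s' * (pol s' a' * h s' a'))"
    by (intro sum.cong refl) (rule sum_swap_outer)
  also have "\<dots> = (\<Sum>s\<in>-Sbot. \<Sum>a\<in>UNIV. \<Sum>s'\<in>-Sbot. \<Sum>a'\<in>UNIV. occ pol n s a * P s a s' * (pol s' a' * h s' a'))"
    by (rule sum_swap_outer)
  also have "\<dots> = (\<Sum>s\<in>-Sbot. \<Sum>a\<in>UNIV. occ pol n s a * trans_op pol h s a)"
    by (simp add: trans_op_def sum_distrib_left mult.assoc)
  finally show ?thesis .
qed

lemma occ_pow_adjoint: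
  "(\<Sum>s\<in>-Sbot. \<Sum>a\<in>UNIV. occ pol n s a * h s a)
     = (\<Sum>s\<in>-Sbot. \<Sum>a\<in>UNIV. occ pol 0 s a * (trans_op pol ^^ n) h s a)"
proof (induction n arbitrary: h)
  case (Suc n)
  show ?case unfolding occ_Suc_adjoint Suc funpow_Suc_right comp_apply ..
qed simp

lemma trans_op_mono:
  "is_policy pol \<Longrightarrow> (\<And>s a. h s a \<le> h' s a) \<Longrightarrow> trans_op pol h s a \<le> trans_op pol h' s a"
  unfolding trans_op_def
  by (intro sum_mono mult_left_mono P_nonneg) (auto intro: mult_left_mono is_policy_nonneg)

lemma trans_op_nonneg:
  assumes "is_policy pol" "\<And>s a. 0 \<le> h s a"
  shows "0 \<le> trans_op pol h s a"
  unfolding trans_op_def using assms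
  by (intro sum_nonneg mult_nonneg_nonneg P_nonneg) (simp_all add: is_policy_nonneg)

lemma trans_op_add: "trans_op pol (\<lambda>s a. h s a + h' s a) s a = trans_op pol h s a + trans_op pol h' s a"
  unfolding trans_op_def by (simp add: distrib_left sum.distrib)

lemma trans_op_cmult: "trans_op pol (\<lambda>s a. c * h s a) s a = c * trans_op pol h s a"
  unfolding trans_op_def by (simp add: sum_distrib_left mult.left_commute)

lemma trans_pow_mono:
  "is_policy pol \<Longrightarrow> (\<And>s a. h s a \<le> h' s a) \<Longrightarrow> (trans_op pol ^^ n) h s a \<le> (trans_op pol ^^ n) h' s a"
  by (induction n arbitrary: s a) (auto intro!: trans_op_mono)

lemma trans_pow_add:
  "(trans_op pol ^^ n) (\<lambda>s a. h s a + h' s a) s a = (trans_op pol ^^ n) h s a + (trans_op pol ^^ n) h' s a"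
proof (induction n arbitrary: s a)
  case (Suc n)
  then have "(trans_op pol ^^ n) (\<lambda>s a. h s a + h' s a)
      = (\<lambda>s a. (trans_op pol ^^ n) h s a + (trans_op pol ^^ n) h' s a)" by auto
  then show ?case by (simp add: trans_op_add)
qed simp

lemma trans_pow_cmult: "(trans_op pol ^^ n) (\<lambda>s a. c * h s a) s a = c * (trans_op pol ^^ n) h s a"
proof (induction n arbitrary: s a)
  case (Suc n)
  then have "(trans_op pol ^^ n) (\<lambda>s a. c * h s a) = (\<lambda>s a. c * (trans_op pol ^^ n) h s a)" by auto
  then show ?case by (simp add: trans_op_cmult)
qed simp

text \<open>The probability that the process started in (s,a) is still outside Sbot after n steps.\<close>

definition survival :: "('s \<Rightarrow> 'a \<Rightarrow> real) \<Rightarrow> nat \<Rightarrow> 's \<Rightarrow> 'a \<Rightarrow> real" where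
  "survival pol n = (trans_op pol ^^ n) (\<lambda>_ _. 1)"

lemma survival_Suc: "survival pol (Suc n) = trans_op pol (survival pol n)"
  by (simp add: survival_def)

lemma survival_nonneg: "is_policy pol \<Longrightarrow> 0 \<le> survival pol n s a"
  unfolding survival_def by (induction n arbitrary: s a) (simp_all add: trans_op_nonneg)

lemma survival_antimono:
  assumes pol: "is_policy pol" and "m \<le> n"
  shows "survival pol n s a \<le> survival pol m s a"
proof -
  have "trans_op pol (\<lambda>_ _. 1) s a \<le> 1" for s a
  proof -
    have "trans_op pol (\<lambda>_ _. 1) s a = (\<Sum>s'\<in>-Sbot. P s a s')"
      by (simp add: trans_op_def is_policy_sum[OF pol])
    also have "\<dots> \<le> (\<Sum>s'\<in>UNIV. P s a s')" by (rule sum_mono2) (auto simp: P_nonneg)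
    finally show ?thesis by (simp add: P_sum)
  qed
  then have "survival pol (Suc k) s a \<le> survival pol k s a" for k s a
    unfolding survival_def funpow_Suc_right comp_apply by (intro trans_pow_mono[OF pol])
  then show ?thesis by (rule lift_Suc_antimono_le[of "\<lambda>n. survival pol n s a", OF _ assms(2)])
qed

lemma traj_prob_pos_prefix:
  assumes pol: "is_policy pol" and "ys \<noteq> []" and "0 < traj_prob P rho pol (ys @ zs)"
  shows "0 < traj_prob P rho pol ys"
  using assms(3)
proof (induction zs rule: rev_induct)
  case (snoc z zs)
  obtain s a where z: "z = (s,a)" by force
  have "traj_prob P rho pol ((ys @ zs) @ [(s,a)])
      = traj_prob P rho pol (ys @ zs) * (P (fst (last (ys @ zs))) (snd (last (ys @ zs))) s * pol s a)"
    using traj_prob_snoc[of "ys @ zs"] assms(2) by simp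
  then have "traj_prob P rho pol (ys @ zs) \<noteq> 0" using snoc.prems z by auto
  then show ?case using snoc.IH traj_prob_ge_0[OF pol, of "ys @ zs"] by simp
qed simp

lemma occ_pos_on_entry:
  assumes pp: "is_policy pp" and tau: "is_policy tau"
    and xs: "xs \<noteq> []" "fst (last xs) \<in> C" "\<forall>x\<in>set (butlast xs). fst x \<notin> Sbot"
      "0 < traj_prob P rho pp xs"
    and agree: "\<And>s a. s \<notin> C \<Longrightarrow> tau s a = pp s a" and pos: "\<And>s. s \<in> C \<Longrightarrow> \<exists>a. 0 < tau s a"
  shows "\<exists>n s a. s \<in> C \<and> 0 < occ tau n s a"
proof -
  define ys where "ys = takeWhile (\<lambda>x. fst x \<notin> C) xs"
  have "dropWhile (\<lambda>x. fst x \<notin> C) xs \<noteq> []"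
    using xs(1,2) by (simp add: dropWhile_eq_Nil_conv) (metis last_in_set)
  then obtain s b zs where drop: "dropWhile (\<lambda>x. fst x \<notin> C) xs = (s,b) # zs"
    by (metis list.exhaust prod.collapse)
  have sC: "s \<in> C" using hd_dropWhile[of "\<lambda>x. fst x \<notin> C" xs] drop by simp
  have split: "xs = (ys @ [(s,b)]) @ zs"
    using takeWhile_dropWhile_id[of "\<lambda>x. fst x \<notin> C" xs] drop by (simp add: ys_def)
  have ys_live: "\<forall>x\<in>set ys. fst x \<notin> Sbot"
    using xs(3) split by (auto simp: butlast_append)
  have "traj_prob P rho tau ys = traj_prob P rho pp ys"
    by (rule traj_prob_cong) (auto simp: ys_def agree dest: set_takeWhileD)
  then have same_prefix: "traj_prob P rho tau (ys @ [(s,a')]) * pp s b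
      = traj_prob P rho pp (ys @ [(s,b)]) * tau s a'" for a'
    by (simp add: traj_prob_snoc_cases)
  have "0 < traj_prob P rho pp (ys @ [(s,b)])"
    using traj_prob_pos_prefix[OF pp _ xs(4)[unfolded split]] by simp
  moreover obtain a where a: "0 < tau s a" using pos[OF sC] by blast
  ultimately have "0 < traj_prob P rho tau (ys @ [(s,a)]) * pp s b"
    by (simp add: same_prefix)
  then have "0 < traj_prob P rho tau (ys @ [(s,a)])"
    using is_policy_nonneg[OF pp, of s b] by (auto simp: zero_less_mult_iff)
  also have "traj_prob P rho tau (ys @ [(s,a)]) \<le> occ tau (length ys) s a"
    by (rule traj_prob_le_occ[OF tau]) (use ys_live in \<open>auto simp: live_paths_def\<close>)
  finally show ?thesis using sC by blast
qed

lemma trans_op_max_propagates: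
  assumes sig: "is_policy sig" and fixed: "\<And>s a. h s a = trans_op sig h s a"
    and le: "\<And>s a. h s a \<le> c" and c: "0 < c" and hsa: "h s a = c" and Ps': "0 < P s a s'"
  shows "s' \<notin> Sbot \<and> (\<forall>a'. 0 < sig s' a' \<longrightarrow> h s' a' = c)"
proof -
  define X where "X s' = (\<Sum>a'\<in>UNIV. sig s' a' * h s' a')" for s'
  have X_le: "X s' \<le> c" for s'
  proof -
    have "X s' \<le> (\<Sum>a'\<in>UNIV. c * sig s' a')" unfolding X_def
      by (intro sum_mono) (metis le is_policy_nonneg[OF sig] mult.commute mult_right_mono)
    then show ?thesis by (simp add: is_policy_sum_collapse[OF sig])
  qed
  \<comment> \<open>c = h s a averages the values X s' \<le> c and 0 < c on Sbot, so every weighted term is tight\<close>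
  define g where "g s' = P s a s' * (c - (if s' \<in> Sbot then 0 else X s'))" for s'
  have "(\<Sum>s'\<in>UNIV. g s') = c * (\<Sum>s'\<in>UNIV. P s a s') - (\<Sum>s'\<in>-Sbot. P s a s' * X s')"
    using sum_UNIV_Compl_split[of "\<lambda>s'. P s a s' * (if s' \<in> Sbot then 0 else X s')" Sbot]
    by (simp add: g_def algebra_simps sum_subtractf sum_distrib_left)
  also have "\<dots> = 0" using fixed[of s a] hsa by (simp add: P_sum trans_op_def X_def)
  finally have "(\<Sum>s'\<in>UNIV. g s') = 0" .
  moreover have "0 \<le> g x" for x
    using X_le c by (auto simp: g_def intro!: mult_nonneg_nonneg P_nonneg)
  ultimately have "g s' = 0" by (simp add: sum_nonneg_eq_0_iff)
  then have ns: "s' \<notin> Sbot" and Xc: "X s' = c" using Ps' c by (auto simp: g_def split: if_splits)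
  have "(\<Sum>a'\<in>UNIV. sig s' a' * (c - h s' a')) = c - X s'"
    by (simp add: X_def algebra_simps sum_subtractf is_policy_sum_collapse[OF sig]
        mult.commute[of _ c])
  then have "(\<Sum>a'\<in>UNIV. sig s' a' * (c - h s' a')) = 0" using Xc by simp
  moreover have "0 \<le> sig s' a' * (c - h s' a')" for a'
    using le[of s' a'] by (simp add: is_policy_nonneg[OF sig])
  ultimately have "sig s' a' * (c - h s' a') = 0" for a' by (simp add: sum_nonneg_eq_0_iff)
  then show ?thesis using ns by (metis less_irrefl mult_eq_0_iff right_minus_eq)
qed

lemma closed_set_mass_mono:
  assumes tau: "is_policy tau" and C: "C \<subseteq> -Sbot"
    and closed: "\<And>s a s'. s \<in> C \<Longrightarrow> 0 < tau s a \<Longrightarrow> 0 < P s a s' \<Longrightarrow> s' \<in> C"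
  shows "(\<Sum>s\<in>C. \<Sum>a\<in>UNIV. occ tau n s a) \<le> (\<Sum>s\<in>C. \<Sum>a\<in>UNIV. occ tau (Suc n) s a)"
proof -
  have "occ tau n s a = (\<Sum>s'\<in>C. occ tau n s a * P s a s')" if "s \<in> C" for s a
  proof (cases "tau s a = 0")
    case False
    then have "0 < tau s a" using is_policy_nonneg[OF tau, of s a] by simp
    then have "(\<Sum>s'\<in>C. P s a s') = (\<Sum>s'\<in>UNIV. P s a s')"
      using closed[OF that] P_nonneg[of s a] by (intro sum.mono_neutral_left) (auto simp: order_less_le)
    then show ?thesis by (simp add: sum_distrib_left[symmetric] P_sum)
  qed (simp add: occ_eq_0_if_policy_eq_0)
  then have "(\<Sum>s\<in>C. \<Sum>a\<in>UNIV. occ tau n s a) = (\<Sum>s'\<in>C. \<Sum>s\<in>C. \<Sum>a\<in>UNIV. occ tau n s a * P s a s')"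
    by (simp add: sum_swap_outer[symmetric])
  also have "\<dots> \<le> (\<Sum>s'\<in>C. \<Sum>s\<in>-Sbot. \<Sum>a\<in>UNIV. occ tau n s a * P s a s')"
    using C by (intro sum_mono sum_mono2)
      (auto intro!: sum_nonneg mult_nonneg_nonneg occ_nonneg[OF tau] P_nonneg)
  also have "\<dots> = (\<Sum>s\<in>C. \<Sum>a\<in>UNIV. occ tau (Suc n) s a)"
  proof (intro sum.cong refl)
    fix s'
    show "(\<Sum>s\<in>-Sbot. \<Sum>a\<in>UNIV. occ tau n s a * P s a s') = (\<Sum>a\<in>UNIV. occ tau (Suc n) s' a)"
      by (simp add: occ_Suc sum_distrib_left[symmetric] is_policy_sum[OF tau])
  qed
  finally show ?thesis .
qed

lemma occ_closed_set_eq_0: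
  assumes tau: "is_policy tau" and C: "C \<subseteq> -Sbot"
    and closed: "\<And>s a s'. s \<in> C \<Longrightarrow> 0 < tau s a \<Longrightarrow> 0 < P s a s' \<Longrightarrow> s' \<in> C"
    and "s \<in> C"
  shows "occ tau n s a = 0"
proof -
  define mass where "mass n = (\<Sum>s\<in>C. \<Sum>a\<in>UNIV. occ tau n s a)" for n
  have "mass n \<le> live_mass tau m" if "n \<le> m" for m
  proof -
    have "mass n \<le> mass m"
      using closed_set_mass_mono[OF tau C closed] by (intro lift_Suc_mono_le[OF _ that]) (simp add: mass_def)
    also have "\<dots> \<le> live_mass tau m" unfolding mass_def live_mass_def
      using C by (intro sum_mono2) (auto intro!: sum_nonneg occ_nonneg[OF tau])
    finally show ?thesis .
  qed
  then have "mass n \<le> 0" by (intro LIMSEQ_le_const[OF live_mass_tendsto_0[OF tau]]) auto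
  moreover have "occ tau n s a \<le> mass n"
  proof -
    have "occ tau n s a \<le> (\<Sum>a\<in>UNIV. occ tau n s a)"
      by (rule member_le_sum) (auto intro: occ_nonneg[OF tau])
    also have "\<dots> \<le> mass n" unfolding mass_def
      using \<open>s \<in> C\<close> by (intro member_le_sum) (auto intro!: sum_nonneg occ_nonneg[OF tau])
    finally show ?thesis .
  qed
  ultimately show ?thesis using occ_nonneg[OF tau, of n s a] by simp
qed

lemma closed_set_empty:
  assumes sig: "is_policy sig" and C: "C \<subseteq> -Sbot"
    and closed: "\<And>s a s'. s \<in> C \<Longrightarrow> 0 < sig s a \<Longrightarrow> 0 < P s a s' \<Longrightarrow> s' \<in> C"
  shows "C = {}"
proof (rule ccontr)
  assume "C \<noteq> {}"
  then obtain x where "x \<in> C" by blast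
  obtain pp xs where pp: "is_policy pp" and xs: "xs \<noteq> []" "fst (last xs) = x"
      "\<forall>x\<in>set (butlast xs). fst x \<notin> Sbot" "0 < traj_prob P rho pp xs"
    using reachable[of x] by (elim exE conjE) blast
  \<comment> \<open>follow pp until C is entered, then stay in C by following sig\<close>
  define tau where "tau s = (if s \<in> C then sig s else pp s)" for s
  have tau: "is_policy tau"
    using sig pp by (simp add: is_policy_def tau_def)
  have "\<exists>n s a. s \<in> C \<and> 0 < occ tau n s a"
  proof (rule occ_pos_on_entry[OF pp tau xs(1) _ xs(3,4)])
    show "fst (last xs) \<in> C" using xs(2) \<open>x \<in> C\<close> by simp
    show "tau s a = pp s a" if "s \<notin> C" for s a using that by (simp add: tau_def)
    show "\<exists>a. 0 < tau s a" if "s \<in> C" for s using that is_policy_ex_pos[OF sig] by (simp add: tau_def)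
  qed
  then obtain n s a where "s \<in> C" "0 < occ tau n s a" by blast
  moreover have "occ tau n s a = 0"
    using closed by (intro occ_closed_set_eq_0[OF tau C _ \<open>s \<in> C\<close>]) (simp add: tau_def)
  ultimately show False by simp
qed

lemma trans_op_fixpoint_eq_0:
  assumes sig: "is_policy sig" and fixed: "\<And>s a. h s a = trans_op sig h s a"
    and nonneg: "\<And>s a. 0 \<le> h s a"
  shows "h s a = 0"
proof (rule ccontr)
  assume "h s a \<noteq> 0"
  obtain s0 a0 where max: "\<And>s a. h s a \<le> h s0 a0" using finite_fun_argmax by blast
  define c where "c = h s0 a0"
  have c: "0 < c" using max[of s a] nonneg[of s a] \<open>h s a \<noteq> 0\<close> by (simp add: c_def)
  define C where "C = {s. s \<notin> Sbot \<and> (\<forall>a. 0 < sig s a \<longrightarrow> h s a = c)}"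
  have enter: "s' \<in> C" if "h s a = c" "0 < P s a s'" for s a s'
  proof -
    have "h s a \<le> c" for s a using max by (simp add: c_def)
    from trans_op_max_propagates[OF sig fixed this c that] show ?thesis by (simp add: C_def)
  qed
  have "trans_op sig h s0 a0 = c" unfolding c_def by (rule fixed[symmetric])
  then have "(\<Sum>s'\<in>-Sbot. P s0 a0 s' * (\<Sum>a'\<in>UNIV. sig s' a' * h s' a')) \<noteq> 0"
    using c by (simp add: trans_op_def)
  then have "\<exists>s'. P s0 a0 s' * (\<Sum>a'\<in>UNIV. sig s' a' * h s' a') \<noteq> 0"
    by (rule contrapos_np) (simp add: sum.neutral)
  then obtain s' where "P s0 a0 s' * (\<Sum>a'\<in>UNIV. sig s' a' * h s' a') \<noteq> 0" by blast
  then have "0 < P s0 a0 s'" using P_nonneg[of s0 a0 s'] by (auto simp: order_less_le)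
  then have "s' \<in> C" by (intro enter) (simp add: c_def)
  moreover have "C = {}"
  proof (rule closed_set_empty[OF sig])
    show "C \<subseteq> -Sbot" by (auto simp: C_def)
    show "s' \<in> C" if "s \<in> C" "0 < sig s a" "0 < P s a s'" for s a s'
      using that by (intro enter) (auto simp: C_def)
  qed
  ultimately show False by simp
qed

lemma survival_tendsto_0:
  assumes sig: "is_policy sig"
  shows "(\<lambda>n. survival sig n s a) \<longlonglongrightarrow> 0"
proof -
  define f where "f s a = lim (\<lambda>n. survival sig n s a)" for s a
  have lim: "(\<lambda>n. survival sig n s a) \<longlonglongrightarrow> f s a" for s a
  proof -
    have "decseq (\<lambda>n. survival sig n s a)"
      by (intro decseq_SucI survival_antimono[OF sig]) simp
    moreover have "\<forall>i. 0 \<le> survival sig i s a" by (simp add: survival_nonneg[OF sig])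
    ultimately obtain L where L: "(\<lambda>n. survival sig n s a) \<longlonglongrightarrow> L"
      by (rule decseq_convergent)
    then show ?thesis unfolding f_def by (simp only: limI[OF L])
  qed
  have "f s a = trans_op sig f s a" for s a
  proof (rule LIMSEQ_unique)
    show "(\<lambda>n. survival sig (Suc n) s a) \<longlonglongrightarrow> f s a" using lim by (rule LIMSEQ_Suc)
    show "(\<lambda>n. survival sig (Suc n) s a) \<longlonglongrightarrow> trans_op sig f s a"
      unfolding survival_Suc trans_op_def by (intro tendsto_sum tendsto_mult_left lim)
  qed
  moreover have "0 \<le> f s a" for s a
    by (rule LIMSEQ_le_const[OF lim]) (auto intro: survival_nonneg[OF sig])
  ultimately have "f s a = 0" by (rule trans_op_fixpoint_eq_0[OF sig])
  then show ?thesis using lim[of s a] by simp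
qed

lemma survival_geometric:
  assumes sig: "is_policy sig"
  obtains q where "0 < q" "q < 1" "\<And>n s a. survival sig n s a \<le> 2 * q ^ n"
proof -
  have "\<forall>\<^sub>F n in sequentially. \<forall>p. survival sig n (fst p) (snd p) < 1/2"
    by (intro eventually_all_finite order_tendstoD(2)[OF survival_tendsto_0[OF sig]]) simp
  then obtain N where N: "\<And>n p. N \<le> n \<Longrightarrow> survival sig n (fst p) (snd p) < 1/2"
    unfolding eventually_sequentially by blast
  define m where "m = Suc N"
  have half: "survival sig m s a \<le> 1/2" for s a using N[of m "(s,a)"] by (simp add: m_def)
  \<comment> \<open>after each block of m steps at most half of the remaining mass survives\<close>
  have blocks: "survival sig (k * m) s a \<le> (1/2) ^ k" for k s a
  proof (induction k arbitrary: s a)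
    case (Suc k)
    have "survival sig (Suc k * m) s a = (trans_op sig ^^ m) (survival sig (k * m)) s a"
      by (simp add: survival_def funpow_add)
    also have "\<dots> \<le> (trans_op sig ^^ m) (\<lambda>s a. (1/2) ^ k * 1) s a"
      using Suc.IH by (intro trans_pow_mono[OF sig]) simp
    also have "\<dots> = (1/2) ^ k * survival sig m s a" by (simp only: trans_pow_cmult survival_def)
    also have "\<dots> \<le> (1/2) ^ k * (1/2)"
      using half by (intro mult_left_mono) simp_all
    finally show ?case by simp
  qed (simp add: survival_def)
  define q where "q = root m (1/2)"
  have q: "0 < q" "q < 1" "q ^ m = 1/2"
    using zero_less_Suc[of N] by (simp_all add: q_def real_root_gt_zero flip: m_def)
  have "survival sig n s a \<le> 2 * q ^ n" for n s a
  proof -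
    define k where "k = n div m"
    have "n = m * k + n mod m" by (simp add: k_def)
    moreover have "n mod m < m" by (simp add: m_def)
    ultimately have "n \<le> m * k + m" by linarith
    then have "q ^ (m * k + m) \<le> q ^ n" using q by (intro power_decreasing) simp_all
    moreover have "survival sig n s a \<le> survival sig (k * m) s a"
      by (rule survival_antimono[OF sig]) (simp add: k_def)
    moreover have "(1/2::real) ^ k = 2 * q ^ (m * k + m)"
      unfolding power_add power_mult q(3) by simp
    ultimately show ?thesis using blocks[of k s a] by simp
  qed
  with q that show thesis by blast
qed

lemma live_mass_le_occ_mass: "is_policy pol \<Longrightarrow> live_mass pol n \<le> occ_mass pol n"
  unfolding occ_mass_split stop_mass_def by (simp add: sum_nonneg occ_nonneg)

lemma occ_mass_geometric:
  assumes sig: "is_policy sig"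
  obtains K q where "0 < q" "q < 1" "\<And>n. occ_mass sig n \<le> K * q ^ n"
proof -
  obtain q where q: "0 < q" "q < 1" "\<And>n s a. survival sig n s a \<le> 2 * q ^ n"
    using survival_geometric[OF sig] by blast
  have "live_mass sig n \<le> 2 * q ^ n" for n
  proof -
    have "live_mass sig n = (\<Sum>s\<in>-Sbot. \<Sum>a\<in>UNIV. occ sig 0 s a * survival sig n s a)"
      using occ_pow_adjoint[of sig n "\<lambda>_ _. 1"] by (simp add: live_mass_def survival_def)
    also have "\<dots> \<le> (\<Sum>s\<in>-Sbot. \<Sum>a\<in>UNIV. occ sig 0 s a * (2 * q ^ n))"
      by (intro sum_mono mult_left_mono q(3) occ_nonneg[OF sig])
    also have "\<dots> = live_mass sig 0 * (2 * q ^ n)" by (simp add: live_mass_def sum_distrib_right)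
    also have "\<dots> \<le> 2 * q ^ n"
      using live_mass_le_occ_mass[OF sig, of 0] q(1) by (simp add: occ_mass_0[OF sig])
    finally show ?thesis .
  qed
  then have "occ_mass sig n \<le> (2 / q) * q ^ n" for n
    using q(1,2) by (cases n) (simp_all add: occ_mass_0[OF sig] occ_mass_Suc[OF sig] field_simps)
  with q(1,2) that show thesis by blast
qed

lemma occ_mass_nonneg: "is_policy pol \<Longrightarrow> 0 \<le> occ_mass pol n"
  unfolding occ_mass_def by (simp add: sum_nonneg occ_nonneg)

lemma occ_mass_decay:
  assumes sig: "is_policy sig"
  shows "summable (occ_mass sig)" "(\<lambda>n. real n * occ_mass sig n) \<longlonglongrightarrow> 0"
proof -
  obtain K q where "0 < q" "q < 1" "\<And>n. occ_mass sig n \<le> K * q ^ n"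
    using occ_mass_geometric[OF sig] by blast
  with occ_mass_nonneg[OF sig] geometric_decay[of q "occ_mass sig" K]
  show "summable (occ_mass sig)" "(\<lambda>n. real n * occ_mass sig n) \<longlonglongrightarrow> 0" by auto
qed

lemma dominated_by_occ_mass:
  assumes sig: "is_policy sig" and bound: "\<And>n. \<bar>x n\<bar> \<le> C * occ_mass sig n"
  shows "summable x" "x \<longlonglongrightarrow> 0"
proof -
  show "summable x"
    by (rule summable_comparison_test[OF _ summable_mult[OF occ_mass_decay(1)[OF sig]]])
       (use bound in auto)
  then show "x \<longlonglongrightarrow> 0" by (rule summable_LIMSEQ_zero)
qed

lemma occ_weighted_bound:
  assumes sig: "is_policy sig" and bound: "\<And>s a. \<bar>h s a\<bar> \<le> B"
  shows "\<bar>\<Sum>s\<in>A. \<Sum>a\<in>UNIV. occ sig n s a * h s a\<bar> \<le> B * occ_mass sig n"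
proof -
  have "\<bar>\<Sum>s\<in>A. \<Sum>a\<in>UNIV. occ sig n s a * h s a\<bar> \<le> (\<Sum>s\<in>A. \<Sum>a\<in>UNIV. \<bar>occ sig n s a * h s a\<bar>)"
    by (rule order.trans[OF sum_abs]) (intro sum_mono sum_abs)
  also have "\<dots> \<le> (\<Sum>s\<in>A. \<Sum>a\<in>UNIV. occ sig n s a * B)"
    by (intro sum_mono) (simp add: abs_mult occ_nonneg[OF sig] mult_left_mono bound)
  also have "\<dots> \<le> (\<Sum>s\<in>UNIV. \<Sum>a\<in>UNIV. occ sig n s a * B)"
    using order.trans[OF abs_ge_zero bound]
    by (intro sum_mono2) (auto intro!: sum_nonneg mult_nonneg_nonneg occ_nonneg[OF sig])
  finally show ?thesis by (simp add: occ_mass_def sum_distrib_left mult.commute)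
qed

section \<open>Expected rewards\<close>

lemma reward_bounded:
  obtains B where "\<And>s. \<bar>R s\<bar> \<le> B"
proof
  show "\<bar>R s\<bar> \<le> (\<Sum>s\<in>UNIV. \<bar>R s\<bar>)" for s by (rule member_le_sum) auto
qed

definition mean_reward :: "'s \<Rightarrow> 'a \<Rightarrow> real" where
  "mean_reward s a = (\<Sum>s'\<in>UNIV. P s a s' * R s')"

definition step_reward :: "('s \<Rightarrow> 'a \<Rightarrow> real) \<Rightarrow> nat \<Rightarrow> real" where
  "step_reward pol n = (\<Sum>s\<in>UNIV. \<Sum>a\<in>UNIV. occ pol n s a * R s)"

lemma step_reward_0:
  assumes pol: "is_policy pol"
  shows "step_reward pol 0 = (\<Sum>s\<in>UNIV. rho s * R s)"
proof -
  have "(\<Sum>a\<in>UNIV. occ pol 0 s a * R s) = rho s * R s * (\<Sum>a\<in>UNIV. pol s a)" for s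
    by (simp add: occ_0 sum_distrib_left mult_ac)
  then show ?thesis by (simp add: step_reward_def is_policy_sum[OF pol])
qed

lemma step_reward_Suc:
  assumes sig: "is_policy sig"
  shows "step_reward sig (Suc n) = (\<Sum>s\<in>-Sbot. \<Sum>a\<in>UNIV. occ sig n s a * mean_reward s a)"
proof -
  have "step_reward sig (Suc n) = (\<Sum>s'\<in>UNIV. \<Sum>a'\<in>UNIV.
      ((\<Sum>s\<in>-Sbot. \<Sum>a\<in>UNIV. occ sig n s a * P s a s') * R s') * sig s' a')"
    unfolding step_reward_def by (intro sum.cong refl) (simp add: occ_Suc mult_ac)
  also have "\<dots> = (\<Sum>s'\<in>UNIV. (\<Sum>s\<in>-Sbot. \<Sum>a\<in>UNIV. occ sig n s a * P s a s') * R s')"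
    by (simp only: is_policy_sum_collapse[OF sig])
  also have "\<dots> = (\<Sum>s'\<in>UNIV. \<Sum>s\<in>-Sbot. \<Sum>a\<in>UNIV. occ sig n s a * (P s a s' * R s'))"
    by (simp add: sum_distrib_right mult.assoc)
  also have "\<dots> = (\<Sum>s\<in>-Sbot. \<Sum>a\<in>UNIV. \<Sum>s'\<in>UNIV. occ sig n s a * (P s a s' * R s'))"
    by (rule sum_swap_outer)
  finally show ?thesis by (simp add: mean_reward_def sum_distrib_left)
qed

definition stopped_reward :: "('s \<Rightarrow> 'a \<Rightarrow> real) \<Rightarrow> nat \<Rightarrow> real" where
  "stopped_reward pol n = (\<Sum>s\<in>Sbot. \<Sum>a\<in>UNIV. cum_reward pol n s a)"

definition live_reward :: "('s \<Rightarrow> 'a \<Rightarrow> real) \<Rightarrow> nat \<Rightarrow> real" where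
  "live_reward pol n = (\<Sum>s\<in>-Sbot. \<Sum>a\<in>UNIV. cum_reward pol n s a)"

lemma stopped_plus_live_reward:
  "stopped_reward pol n + live_reward pol n = (\<Sum>s\<in>UNIV. \<Sum>a\<in>UNIV. cum_reward pol n s a)"
  unfolding stopped_reward_def live_reward_def by (rule sum_UNIV_Compl_split[symmetric])

lemma stopped_plus_live_reward_Suc:
  assumes sig: "is_policy sig"
  shows "stopped_reward sig (Suc n) + live_reward sig (Suc n) = live_reward sig n + step_reward sig (Suc n)"
proof -
  have "stopped_reward sig (Suc n) + live_reward sig (Suc n) = (\<Sum>s'\<in>UNIV. \<Sum>a'\<in>UNIV.
      (\<Sum>s\<in>-Sbot. \<Sum>a\<in>UNIV. (cum_reward sig n s a + occ sig n s a * R s') * P s a s') * sig s' a')"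
    unfolding stopped_plus_live_reward by (simp add: cum_reward_Suc)
  also have "\<dots> = (\<Sum>s'\<in>UNIV.
      \<Sum>s\<in>-Sbot. \<Sum>a\<in>UNIV. (cum_reward sig n s a + occ sig n s a * R s') * P s a s')"
    by (simp only: is_policy_sum_collapse[OF sig])
  also have "\<dots> = (\<Sum>s'\<in>UNIV. \<Sum>s\<in>-Sbot. \<Sum>a\<in>UNIV.
      cum_reward sig n s a * P s a s' + occ sig n s a * (P s a s' * R s'))"
    by (intro sum.cong refl) (simp add: algebra_simps)
  also have "\<dots> = (\<Sum>s\<in>-Sbot. \<Sum>a\<in>UNIV. \<Sum>s'\<in>UNIV.
      cum_reward sig n s a * P s a s' + occ sig n s a * (P s a s' * R s'))"
    by (rule sum_swap_outer)
  also have "\<dots> = live_reward sig n + step_reward sig (Suc n)"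
    by (simp add: sum.distrib sum_distrib_left[symmetric] P_sum mean_reward_def
        live_reward_def step_reward_Suc[OF sig])
  finally show ?thesis .
qed

lemma stopped_reward_partial_sums:
  assumes sig: "is_policy sig"
  shows "(\<Sum>k<Suc n. stopped_reward sig k) + live_reward sig n = (\<Sum>k<Suc n. step_reward sig k)"
proof (induction n)
  case 0
  show ?case using stopped_plus_live_reward[of sig 0]
    by (simp add: step_reward_def cum_reward_0)
next
  case (Suc n)
  then show ?case using stopped_plus_live_reward_Suc[OF sig, of n] by simp
qed

lemma cum_reward_bound:
  assumes sig: "is_policy sig" and R_le: "\<And>s. \<bar>R s\<bar> \<le> B"
  shows "\<bar>cum_reward sig n s a\<bar> \<le> real (Suc n) * B * occ sig n s a"
proof (induction n arbitrary: s a)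
  case 0
  have "\<bar>cum_reward sig 0 s a\<bar> = occ sig 0 s a * \<bar>R s\<bar>"
    by (simp add: cum_reward_0 abs_mult occ_nonneg[OF sig])
  also have "\<dots> \<le> occ sig 0 s a * B" by (rule mult_left_mono[OF R_le occ_nonneg[OF sig]])
  finally show ?case by (simp add: mult.commute)
next
  case (Suc n)
  define c where "c = real (Suc (Suc n)) * B"
  have step: "\<bar>(cum_reward sig n s0 a0 + occ sig n s0 a0 * R s) * P s0 a0 s\<bar>
      \<le> c * (occ sig n s0 a0 * P s0 a0 s)" for s0 a0
  proof -
    have "\<bar>occ sig n s0 a0 * R s\<bar> \<le> occ sig n s0 a0 * B"
      unfolding abs_mult abs_of_nonneg[OF occ_nonneg[OF sig]]
      by (rule mult_left_mono[OF R_le occ_nonneg[OF sig]])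
    moreover have "real (Suc n) * B * occ sig n s0 a0 + occ sig n s0 a0 * B = c * occ sig n s0 a0"
      by (simp add: c_def algebra_simps)
    ultimately have "\<bar>cum_reward sig n s0 a0 + occ sig n s0 a0 * R s\<bar> \<le> c * occ sig n s0 a0"
      using abs_triangle_ineq[of "cum_reward sig n s0 a0" "occ sig n s0 a0 * R s"] Suc.IH[of s0 a0]
      by linarith
    from mult_right_mono[OF this P_nonneg[of s0 a0 s]] show ?thesis
      by (simp add: abs_mult abs_of_nonneg[OF P_nonneg] mult.assoc)
  qed
  have "\<bar>\<Sum>s0\<in>-Sbot. \<Sum>a0\<in>UNIV. (cum_reward sig n s0 a0 + occ sig n s0 a0 * R s) * P s0 a0 s\<bar>
      \<le> (\<Sum>s0\<in>-Sbot. \<Sum>a0\<in>UNIV. c * (occ sig n s0 a0 * P s0 a0 s))"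
    by (rule order.trans[OF sum_abs], rule sum_mono, rule order.trans[OF sum_abs], rule sum_mono, rule step)
  then have "\<bar>cum_reward sig (Suc n) s a\<bar>
      \<le> c * (\<Sum>s0\<in>-Sbot. \<Sum>a0\<in>UNIV. occ sig n s0 a0 * P s0 a0 s) * sig s a"
    unfolding cum_reward_Suc abs_mult abs_of_nonneg[OF is_policy_nonneg[OF sig]]
    by (intro mult_right_mono is_policy_nonneg[OF sig]) (simp add: sum_distrib_left)
  then show ?case by (simp add: occ_Suc c_def mult.assoc)
qed

lemma live_reward_tendsto_0:
  assumes sig: "is_policy sig"
  shows "live_reward sig \<longlonglongrightarrow> 0"
proof -
  obtain B where R_le: "\<And>s. \<bar>R s\<bar> \<le> B" using reward_bounded by blast
  have B: "0 \<le> B" by (rule order.trans[OF abs_ge_zero R_le])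
  have bound: "norm (live_reward sig n) \<le> B * (real n * occ_mass sig n + occ_mass sig n)" for n
  proof -
    have "\<bar>live_reward sig n\<bar> \<le> (\<Sum>s\<in>-Sbot. \<Sum>a\<in>UNIV. real (Suc n) * B * occ sig n s a)"
      unfolding live_reward_def
      by (rule order.trans[OF sum_abs], rule sum_mono, rule order.trans[OF sum_abs], rule sum_mono,
          rule cum_reward_bound[OF sig R_le])
    also have "\<dots> = real (Suc n) * B * live_mass sig n" by (simp add: live_mass_def sum_distrib_left)
    also have "\<dots> \<le> real (Suc n) * B * occ_mass sig n"
      using B by (intro mult_left_mono live_mass_le_occ_mass[OF sig]) simp
    also have "\<dots> = B * (real n * occ_mass sig n + occ_mass sig n)" by (simp add: algebra_simps)
    finally show ?thesis by simp
  qed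
  have "(\<lambda>n. B * (real n * occ_mass sig n + occ_mass sig n)) \<longlonglongrightarrow> B * (0 + 0)"
    by (intro tendsto_mult_left tendsto_add occ_mass_decay(2)[OF sig]
        summable_LIMSEQ_zero[OF occ_mass_decay(1)[OF sig]])
  then show ?thesis by (intro Lim_null_comparison[OF always_eventually[OF allI[OF bound]]]) simp
qed

lemma step_reward_sums_J: assumes sig: "is_policy sig" shows "step_reward sig sums J P R rho Sbot sig"
proof -
  obtain B where "\<And>s. \<bar>R s\<bar> \<le> B" using reward_bounded by blast
  then have "\<bar>step_reward sig n\<bar> \<le> B * occ_mass sig n" for n
    unfolding step_reward_def by (rule occ_weighted_bound[OF sig])
  then have summable: "summable (step_reward sig)" by (rule dominated_by_occ_mass[OF sig])
  then have "(\<lambda>n. (\<Sum>k<Suc n. step_reward sig k) - live_reward sig n) \<longlonglongrightarrow> suminf (step_reward sig) - 0"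
    by (intro tendsto_intros LIMSEQ_Suc[OF summable_LIMSEQ] live_reward_tendsto_0[OF sig])
  moreover have "(\<lambda>n. (\<Sum>k<Suc n. step_reward sig k) - live_reward sig n)
      = (\<lambda>n. \<Sum>k<Suc n. stopped_reward sig k)"
    by (rule ext) (metis stopped_reward_partial_sums[OF sig] add_diff_cancel_right')
  ultimately have "(\<lambda>n. \<Sum>k<Suc n. stopped_reward sig k) \<longlonglongrightarrow> suminf (step_reward sig)"
    by simp
  then have "stopped_reward sig sums suminf (step_reward sig)"
    unfolding sums_def by (rule LIMSEQ_imp_Suc)
  then have "J P R rho Sbot sig = suminf (step_reward sig)"
    unfolding J_def stopped_reward_def cum_reward_def by (rule episode_exp_eqI)
  then show ?thesis using summable_sums[OF summable] by simp
qed

section \<open>The occupancy identity\<close>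

definition occupancy :: "('s \<Rightarrow> 'a \<Rightarrow> real) \<Rightarrow> 's \<Rightarrow> 'a \<Rightarrow> real" where
  "occupancy pol s a = (\<Sum>n. occ pol n s a)"

definition terminal_exp :: "('s \<Rightarrow> 'a \<Rightarrow> real) \<Rightarrow> ('s \<Rightarrow> 'a \<Rightarrow> real) \<Rightarrow> real" where
  "terminal_exp pol Q = episode_exp P rho Sbot pol (\<lambda>xs. Q (fst (last xs)) (snd (last xs)))"

definition policy_bellman :: "('s \<Rightarrow> 'a \<Rightarrow> real) \<Rightarrow> ('s \<Rightarrow> 'a \<Rightarrow> real) \<Rightarrow> 's \<Rightarrow> 'a \<Rightarrow> real" where
  "policy_bellman pol Q s a = mean_reward s a + trans_op pol Q s a"

definition live_value :: "('s \<Rightarrow> 'a \<Rightarrow> real) \<Rightarrow> ('s \<Rightarrow> 'a \<Rightarrow> real) \<Rightarrow> nat \<Rightarrow> real" where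
  "live_value pol Q n = (\<Sum>s\<in>-Sbot. \<Sum>a\<in>UNIV. occ pol n s a * Q s a)"

lemma occ_summable: "is_policy sig \<Longrightarrow> summable (\<lambda>n. occ sig n s a)"
proof -
  assume sig: "is_policy sig"
  have "occ sig n s a \<le> occ_mass sig n" for n
  proof -
    have "occ sig n s a \<le> (\<Sum>a\<in>UNIV. occ sig n s a)"
      by (rule member_le_sum) (auto intro: occ_nonneg[OF sig])
    also have "\<dots> \<le> occ_mass sig n" unfolding occ_mass_def
      by (rule member_le_sum) (auto intro!: sum_nonneg occ_nonneg[OF sig])
    finally show ?thesis .
  qed
  then show ?thesis
    using occ_nonneg[OF sig] by (intro dominated_by_occ_mass(1)[OF sig, of _ 1]) simp
qed

lemma occupancy_nonneg: "is_policy sig \<Longrightarrow> 0 \<le> occupancy sig s a"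
  unfolding occupancy_def by (rule suminf_nonneg[OF occ_summable]) (auto intro: occ_nonneg)

lemma terminal_exp_sums:
  assumes sig: "is_policy sig"
  shows "(\<lambda>n. \<Sum>s\<in>Sbot. \<Sum>a\<in>UNIV. occ sig n s a * Q s a) sums terminal_exp sig Q"
proof -
  obtain B where "\<And>s a. \<bar>Q s a\<bar> \<le> B" using bounded_finite_fun by blast
  then have "summable (\<lambda>n. \<Sum>s\<in>Sbot. \<Sum>a\<in>UNIV. occ sig n s a * Q s a)"
    by (intro dominated_by_occ_mass(1)[OF sig] occ_weighted_bound[OF sig])
  moreover have "path_sum sig (\<lambda>xs. Q (fst (last xs)) (snd (last xs))) n s a = occ sig n s a * Q s a"
    for n s a
    unfolding occ_def path_sum_def sum_distrib_right
    by (intro sum.cong refl) (auto simp: live_paths_def)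
  ultimately show ?thesis
    unfolding terminal_exp_def using episode_exp_eqI summable_sums by fastforce
qed

lemma restart_mean_reward: "is_policy sig \<Longrightarrow> s \<in> Sbot \<Longrightarrow> mean_reward s a = step_reward sig 0"
  by (simp add: mean_reward_def step_reward_0 restart)

lemma restart_trans_op: "s \<in> Sbot \<Longrightarrow> trans_op sig Q s a = live_value sig Q 0"
  by (simp add: trans_op_def live_value_def occ_0 restart sum_distrib_left mult.assoc)

text \<open>Summed over n, the live_value terms telescope and stop_mass sums to 1.\<close>

lemma occ_bellman_residual:
  assumes sig: "is_policy sig"
  shows "(\<Sum>s\<in>Sbot. \<Sum>a\<in>UNIV. occ sig n s a * Q s a)
      + (\<Sum>s\<in>UNIV. \<Sum>a\<in>UNIV. occ sig n s a * (policy_bellman sig Q s a - Q s a))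
    = step_reward sig (Suc n) + stop_mass sig n * (step_reward sig 0 + live_value sig Q 0)
      + (live_value sig Q (Suc n) - live_value sig Q n)"
proof -
  have Q_split: "(\<Sum>s\<in>UNIV. \<Sum>a\<in>UNIV. occ sig n s a * Q s a)
      = (\<Sum>s\<in>Sbot. \<Sum>a\<in>UNIV. occ sig n s a * Q s a) + live_value sig Q n"
    unfolding live_value_def by (rule sum_UNIV_Compl_split)
  have "(\<Sum>s\<in>Sbot. \<Sum>a\<in>UNIV. occ sig n s a * policy_bellman sig Q s a)
      = stop_mass sig n * (step_reward sig 0 + live_value sig Q 0)"
    by (simp add: policy_bellman_def restart_mean_reward[OF sig] restart_trans_op stop_mass_def
        sum_distrib_right)
  moreover have "(\<Sum>s\<in>-Sbot. \<Sum>a\<in>UNIV. occ sig n s a * policy_bellman sig Q s a)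
      = step_reward sig (Suc n) + live_value sig Q (Suc n)"
    unfolding policy_bellman_def distrib_left sum.distrib step_reward_Suc[OF sig] live_value_def
      occ_Suc_adjoint ..
  ultimately have "(\<Sum>s\<in>UNIV. \<Sum>a\<in>UNIV. occ sig n s a * policy_bellman sig Q s a)
      = stop_mass sig n * (step_reward sig 0 + live_value sig Q 0)
        + step_reward sig (Suc n) + live_value sig Q (Suc n)"
    by (simp add: sum_UNIV_Compl_split[where A = Sbot])
  then show ?thesis
    by (simp add: right_diff_distrib sum_subtractf Q_split)
qed

lemma occupancy_identity:
  assumes sig: "is_policy sig"
  shows "terminal_exp sig Q + (\<Sum>s\<in>UNIV. \<Sum>a\<in>UNIV. occupancy sig s a * (policy_bellman sig Q s a - Q s a))
    = J P R rho Sbot sig"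
proof -
  let ?X = "\<lambda>n. (\<Sum>s\<in>Sbot. \<Sum>a\<in>UNIV. occ sig n s a * Q s a)
      + (\<Sum>s\<in>UNIV. \<Sum>a\<in>UNIV. occ sig n s a * (policy_bellman sig Q s a - Q s a))"
  have "?X sums (terminal_exp sig Q
      + (\<Sum>s\<in>UNIV. \<Sum>a\<in>UNIV. occupancy sig s a * (policy_bellman sig Q s a - Q s a)))"
    unfolding occupancy_def
    by (intro sums_add terminal_exp_sums[OF sig] sums_sum sums_mult2 summable_sums occ_summable[OF sig])
  moreover have "?X sums J P R rho Sbot sig"
  proof -
    obtain B where "\<And>s a. \<bar>Q s a\<bar> \<le> B" using bounded_finite_fun by blast
    then have "live_value sig Q \<longlonglongrightarrow> 0"
      unfolding live_value_def by (intro dominated_by_occ_mass(2)[OF sig] occ_weighted_bound[OF sig])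
    then have "(\<lambda>n. live_value sig Q (Suc n) - live_value sig Q n) sums (0 - live_value sig Q 0)"
      by (rule telescope_sums)
    moreover have "(\<lambda>n. step_reward sig (Suc n)) sums (J P R rho Sbot sig - step_reward sig 0)"
      using step_reward_sums_J[OF sig] by (simp add: sums_Suc_iff)
    moreover have "(\<lambda>n. stop_mass sig n * (step_reward sig 0 + live_value sig Q 0))
        sums (1 * (step_reward sig 0 + live_value sig Q 0))"
      by (rule sums_mult2[OF stop_mass_sums[OF sig]])
    ultimately have "(\<lambda>n. step_reward sig (Suc n) + stop_mass sig n * (step_reward sig 0 + live_value sig Q 0)
        + (live_value sig Q (Suc n) - live_value sig Q n))
      sums (J P R rho Sbot sig - step_reward sig 0 + 1 * (step_reward sig 0 + live_value sig Q 0)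
        + (0 - live_value sig Q 0))"
      by (intro sums_add)
    then show ?thesis unfolding occ_bellman_residual[OF sig] by simp
  qed
  ultimately show ?thesis by (simp add: sums_unique2)
qed

lemma policy_bellman_le_bellman:
  assumes sig: "is_policy sig"
  shows "policy_bellman sig Q s a \<le> bellman P R Sbot Q s a"
proof -
  have "(\<Sum>a'\<in>UNIV. sig s' a' * Q s' a') \<le> Max (range (Q s'))" for s'
  proof -
    have "Q s' a' \<le> Max (range (Q s'))" for a' by (rule Max_ge) auto
    then have "(\<Sum>a'\<in>UNIV. sig s' a' * Q s' a') \<le> (\<Sum>a'\<in>UNIV. sig s' a' * Max (range (Q s')))"
      by (intro sum_mono mult_left_mono is_policy_nonneg[OF sig])
    then show ?thesis by (simp add: sum_distrib_right[symmetric] is_policy_sum[OF sig])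
  qed
  then have "trans_op sig Q s a \<le> (\<Sum>s'\<in>-Sbot. P s a s' * Max (range (Q s')))"
    unfolding trans_op_def by (intro sum_mono mult_left_mono P_nonneg)
  moreover have "bellman P R Sbot Q s a = mean_reward s a + (\<Sum>s'\<in>-Sbot. P s a s' * Max (range (Q s')))"
    using sum_UNIV_Compl_split[of "\<lambda>s'. P s a s' * (if s' \<notin> Sbot then Max (range (Q s')) else 0)" Sbot]
    by (simp add: bellman_def mean_reward_def distrib_left sum.distrib)
  ultimately show ?thesis by (simp add: policy_bellman_def)
qed

lemma lagrangian_dual_bound:
  assumes mu: "is_policy mu"
  shows "J P R rho Sbot mu \<le> lagrangian P R rho Sbot mu Q (occupancy mu)"
proof -
  have "J P R rho Sbot mu
      = terminal_exp mu Q + (\<Sum>s\<in>UNIV. \<Sum>a\<in>UNIV. occupancy mu s a * (policy_bellman mu Q s a - Q s a))"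
    by (rule occupancy_identity[OF mu, symmetric])
  also have "\<dots> \<le> lagrangian P R rho Sbot mu Q (occupancy mu)"
    unfolding lagrangian_def terminal_exp_def[symmetric]
    by (intro add_left_mono sum_mono mult_left_mono occupancy_nonneg[OF mu] diff_right_mono
        policy_bellman_le_bellman[OF mu])
  finally show ?thesis .
qed

section \<open>Optimal action values\<close>

lemma bellman_eq:
  "bellman P R Sbot Q s a = mean_reward s a + (\<Sum>s'\<in>-Sbot. P s a s' * Max (range (Q s')))"
  using sum_UNIV_Compl_split[of "\<lambda>s'. P s a s' * (if s' \<notin> Sbot then Max (range (Q s')) else 0)" Sbot]
  by (simp add: bellman_def mean_reward_def distrib_left sum.distrib)

lemma trans_pow_bound:
  assumes sig: "is_policy sig" and bound: "\<And>s a. \<bar>h s a\<bar> \<le> B"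
  shows "\<bar>(trans_op sig ^^ n) h s a\<bar> \<le> B * survival sig n s a"
proof -
  have "(trans_op sig ^^ n) h s a \<le> (trans_op sig ^^ n) (\<lambda>s a. B * 1) s a"
    using bound by (intro trans_pow_mono[OF sig]) (simp add: abs_le_iff)
  moreover have "-B \<le> h s a" for s a using bound[of s a] by linarith
  then have "(trans_op sig ^^ n) (\<lambda>s a. (- B) * 1) s a \<le> (trans_op sig ^^ n) h s a"
    by (intro trans_pow_mono[OF sig]) simp
  ultimately show ?thesis
    unfolding trans_pow_cmult survival_def[symmetric] by (simp add: abs_le_iff)
qed

lemma trans_pow_decay:
  assumes sig: "is_policy sig"
  shows "summable (\<lambda>n. (trans_op sig ^^ n) h s a)" "(\<lambda>n. (trans_op sig ^^ n) h s a) \<longlonglongrightarrow> 0"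
proof -
  obtain B where B: "\<And>s a. \<bar>h s a\<bar> \<le> B" using bounded_finite_fun[of h] by blast
  obtain q where q: "0 < q" "q < 1" "\<And>n s a. survival sig n s a \<le> 2 * q ^ n"
    using survival_geometric[OF sig] by blast
  have "\<bar>survival sig n s a\<bar> \<le> 2 * q ^ n" for n
    using q(3) survival_nonneg[OF sig] by simp
  then have "summable (\<lambda>n. B * survival sig n s a)"
    by (intro summable_mult geometric_decay(1)[OF q(1,2)])
  moreover have "norm ((trans_op sig ^^ n) h s a) \<le> B * survival sig n s a" for n
    using trans_pow_bound[OF sig B] by simp
  ultimately show "summable (\<lambda>n. (trans_op sig ^^ n) h s a)"
    by (rule summable_comparison_test')
  then show "(\<lambda>n. (trans_op sig ^^ n) h s a) \<longlonglongrightarrow> 0" by (rule summable_LIMSEQ_zero)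
qed

lemma trans_op_sums:
  "(\<And>s a. (\<lambda>n. g n s a) sums G s a) \<Longrightarrow> (\<lambda>n. trans_op pol (g n) s a) sums trans_op pol G s a"
  unfolding trans_op_def by (intro sums_sum sums_mult)

definition q_value :: "('s \<Rightarrow> 'a \<Rightarrow> real) \<Rightarrow> 's \<Rightarrow> 'a \<Rightarrow> real" where
  "q_value sig s a = (\<Sum>n. (trans_op sig ^^ n) mean_reward s a)"

lemma q_value_sums: "is_policy sig \<Longrightarrow> (\<lambda>n. (trans_op sig ^^ n) mean_reward s a) sums q_value sig s a"
  unfolding q_value_def by (intro summable_sums trans_pow_decay)

lemma q_value_fixpoint:
  assumes sig: "is_policy sig"
  shows "q_value sig s a = policy_bellman sig (q_value sig) s a"
proof -
  have "(\<lambda>n. (trans_op sig ^^ Suc n) mean_reward s a) sums trans_op sig (q_value sig) s a"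
    unfolding funpow.simps comp_apply by (rule trans_op_sums[OF q_value_sums[OF sig]])
  then have "(\<lambda>n. (trans_op sig ^^ n) mean_reward s a)
      sums (trans_op sig (q_value sig) s a + (trans_op sig ^^ 0) mean_reward s a)"
    by (rule sums_Suc)
  then show ?thesis
    using sums_unique2[OF q_value_sums[OF sig]] by (simp add: policy_bellman_def)
qed

lemma q_value_greatest_subsolution:
  assumes sig: "is_policy sig" and sub: "\<And>s a. Q s a \<le> policy_bellman sig Q s a"
  shows "Q s a \<le> q_value sig s a"
proof -
  have partial: "Q s a \<le> (\<Sum>k<n. (trans_op sig ^^ k) mean_reward s a) + (trans_op sig ^^ n) Q s a"
    for n s a
  proof (induction n arbitrary: s a)
    case (Suc n)
    have "(trans_op sig ^^ n) Q s a \<le> (trans_op sig ^^ n) (\<lambda>s a. mean_reward s a + trans_op sig Q s a) s a"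
      using sub by (intro trans_pow_mono[OF sig]) (simp add: policy_bellman_def)
    also have "\<dots> = (trans_op sig ^^ n) mean_reward s a + (trans_op sig ^^ Suc n) Q s a"
      by (simp only: trans_pow_add funpow_Suc_right comp_apply)
    finally show ?case using Suc[of s a] by simp
  qed simp
  have "(\<lambda>n. (\<Sum>k<n. (trans_op sig ^^ k) mean_reward s a) + (trans_op sig ^^ n) Q s a)
      \<longlonglongrightarrow> q_value sig s a + 0"
    using q_value_sums[OF sig, of s a] unfolding sums_def
    by (intro tendsto_add trans_pow_decay(2)[OF sig])
  then show ?thesis by (intro LIMSEQ_le_const[where x = "q_value sig s a"]) (use partial in auto)
qed

lemma trans_op_det_policy:
  "trans_op (det_policy phi) h s a = (\<Sum>s'\<in>-Sbot. P s a s' * h s' (phi s'))"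
  unfolding trans_op_def det_policy_def by (simp add: if_distrib[of "\<lambda>x. x * _"] cong: if_cong)

lemma exists_predecessor:
  assumes "s1 \<notin> Sbot"
  shows "\<exists>s a. 0 < P s a s1"
proof -
  obtain pp xs where pp: "is_policy pp" and xs: "xs \<noteq> []" "fst (last xs) = s1"
      "0 < traj_prob P rho pp xs"
    using reachable[of s1] by blast
  define ys where "ys = butlast xs"
  define b where "b = snd (last xs)"
  have "last xs = (s1, b)" using xs(2) by (simp add: b_def prod_eq_iff)
  then have xs_eq: "xs = ys @ [(s1, b)]" using append_butlast_last_id[OF xs(1)] by (simp add: ys_def)
  define F where "F = (if ys = [] then rho s1 else traj_prob P rho pp ys * P (fst (last ys)) (snd (last ys)) s1)"
  have "0 < F * pp s1 b" using xs(3) unfolding xs_eq F_def traj_prob_snoc_cases .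
  then have F: "0 < F" using is_policy_nonneg[OF pp, of s1 b] by (simp add: zero_less_mult_iff)
  show ?thesis
  proof (cases "ys = []")
    case True
    obtain s0 where "s0 \<in> Sbot" using Sbot_nonempty by blast
    then have "P s0 undefined s1 = F" using True by (simp add: F_def restart)
    then show ?thesis using F by auto
  next
    case False
    then have "0 < traj_prob P rho pp ys * P (fst (last ys)) (snd (last ys)) s1" using F by (simp add: F_def)
    then have "0 < P (fst (last ys)) (snd (last ys)) s1"
      using traj_prob_ge_0[OF pp, of ys] P_nonneg[of "fst (last ys)" "snd (last ys)" s1]
      by (simp add: zero_less_mult_iff)
    then show ?thesis by blast
  qed
qed

lemma q_value_improvement:
  assumes s1: "s1 \<notin> Sbot"
    and better: "q_value (det_policy phi) s1 (phi s1) < q_value (det_policy phi) s1 a1"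
  shows "q_value (det_policy phi) s a \<le> q_value (det_policy (phi(s1 := a1))) s a"
    and "0 < P s a s1 \<Longrightarrow> q_value (det_policy phi) s a < q_value (det_policy (phi(s1 := a1))) s a"
proof -
  define Q where "Q = q_value (det_policy phi)"
  define Q' where "Q' = q_value (det_policy (phi(s1 := a1)))"
  have gain: "trans_op (det_policy (phi(s1 := a1))) Q s a
      = trans_op (det_policy phi) Q s a + P s a s1 * (Q s1 a1 - Q s1 (phi s1))" for s a
  proof -
    have "(\<Sum>s'\<in>-Sbot. P s a s' * (Q s' ((phi(s1 := a1)) s') - Q s' (phi s')))
        = P s a s1 * (Q s1 a1 - Q s1 (phi s1))"
      using s1 by (subst sum.remove[of _ s1]) auto
    then show ?thesis by (simp add: trans_op_det_policy algebra_simps sum_subtractf)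
  qed
  have fix_Q: "Q s a = policy_bellman (det_policy phi) Q s a" for s a
    unfolding Q_def by (rule q_value_fixpoint[OF is_policy_det_policy])
  have sub: "Q s a \<le> policy_bellman (det_policy (phi(s1 := a1))) Q s a" for s a
    using fix_Q[of s a] gain[of s a] better P_nonneg[of s a s1] by (simp add: policy_bellman_def Q_def)
  have le: "Q s a \<le> Q' s a" for s a
    unfolding Q'_def by (rule q_value_greatest_subsolution[OF is_policy_det_policy sub])
  then show "q_value (det_policy phi) s a \<le> q_value (det_policy (phi(s1 := a1))) s a"
    by (simp add: Q_def Q'_def)
  assume "0 < P s a s1"
  then have "Q s a < policy_bellman (det_policy (phi(s1 := a1))) Q s a"
    using fix_Q[of s a] gain[of s a] better by (simp add: policy_bellman_def Q_def)
  also have "\<dots> \<le> policy_bellman (det_policy (phi(s1 := a1))) Q' s a"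
    unfolding policy_bellman_def by (simp add: trans_op_mono[OF is_policy_det_policy le])
  also have "\<dots> = Q' s a" unfolding Q'_def by (rule q_value_fixpoint[OF is_policy_det_policy, symmetric])
  finally show "q_value (det_policy phi) s a < q_value (det_policy (phi(s1 := a1))) s a"
    by (simp add: Q_def Q'_def)
qed

lemma exists_greedy_det_policy:
  "\<exists>phi. \<forall>s a. s \<notin> Sbot \<longrightarrow> q_value (det_policy phi) s a \<le> q_value (det_policy phi) s (phi s)"
proof -
  define F where "F phi = (\<Sum>s\<in>UNIV. \<Sum>a\<in>UNIV. q_value (det_policy phi) s a)" for phi :: "'s \<Rightarrow> 'a"
  have "Max (range F) \<in> range F" by (rule Max_in) simp_all
  then obtain phi where phi: "F phi = Max (range F)" by (metis imageE)
  have max: "F psi \<le> F phi" for psi unfolding phi by (rule Max_ge) auto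
  show ?thesis
  proof (intro exI allI impI, rule ccontr)
    fix s1 a1
    assume s1: "s1 \<notin> Sbot" and "\<not> q_value (det_policy phi) s1 a1 \<le> q_value (det_policy phi) s1 (phi s1)"
    then have better: "q_value (det_policy phi) s1 (phi s1) < q_value (det_policy phi) s1 a1" by simp
    note improvement = q_value_improvement[OF s1 better]
    obtain s0 a0 where P0: "0 < P s0 a0 s1" using exists_predecessor[OF s1] by blast
    have "F phi < F (phi(s1 := a1))"
      unfolding F_def
    proof (rule sum_strict_mono_ex1)
      show "\<forall>s\<in>UNIV. (\<Sum>a\<in>UNIV. q_value (det_policy phi) s a)
          \<le> (\<Sum>a\<in>UNIV. q_value (det_policy (phi(s1 := a1))) s a)"
        by (intro ballI sum_mono improvement(1))
      have "(\<Sum>a\<in>UNIV. q_value (det_policy phi) s0 a) < (\<Sum>a\<in>UNIV. q_value (det_policy (phi(s1 := a1))) s0 a)"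
        using improvement(1) improvement(2)[OF P0] by (intro sum_strict_mono_ex1) auto
      then show "\<exists>s\<in>UNIV. (\<Sum>a\<in>UNIV. q_value (det_policy phi) s a)
          < (\<Sum>a\<in>UNIV. q_value (det_policy (phi(s1 := a1))) s a)" by blast
    qed simp
    with max[of "phi(s1 := a1)"] show False by simp
  qed
qed

lemma lagrangian_primal_bound:
  assumes opt: "is_optimal P R rho Sbot mu"
  obtains Q where "\<And>lam. lagrangian P R rho Sbot mu Q lam \<le> J P R rho Sbot mu"
proof -
  have mu: "is_policy mu" using opt by (simp add: is_optimal_def)
  obtain phi where greedy: "\<And>s a. s \<notin> Sbot \<Longrightarrow> q_value (det_policy phi) s a \<le> q_value (det_policy phi) s (phi s)"
    using exists_greedy_det_policy by blast
  define sig where "sig = det_policy phi"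
  define Q where "Q = q_value sig"
  have sig: "is_policy sig" by (simp add: sig_def is_policy_det_policy)
  have fix_Q: "Q s a = policy_bellman sig Q s a" for s a unfolding Q_def by (rule q_value_fixpoint[OF sig])
  \<comment> \<open>Q is the value of a policy that is greedy for it, hence a fixed point of the Bellman operator\<close>
  have "bellman P R Sbot Q s a = Q s a" for s a
  proof -
    have "Max (range (Q s')) = Q s' (phi s')" if "s' \<notin> Sbot" for s'
      by (rule Max_eqI) (use greedy[OF that] in \<open>auto simp: Q_def sig_def\<close>)
    then show ?thesis
      by (simp add: bellman_eq fix_Q[of s a] policy_bellman_def sig_def trans_op_det_policy)
  qed
  then have lagrangian_Q: "lagrangian P R rho Sbot mu Q lam = terminal_exp mu Q" for lam
    by (simp add: lagrangian_def terminal_exp_def)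
  define c where "c = step_reward sig 0 + live_value sig Q 0"
  have "Q s a = c" if "s \<in> Sbot" for s a
    using fix_Q[of s a] by (simp add: policy_bellman_def restart_mean_reward[OF sig that]
        restart_trans_op[OF that] c_def)
  \<comment> \<open>as Q is constant on Sbot, its expectation at the stopping time does not depend on the policy\<close>
  then have terminal_c: "terminal_exp pol Q = c" if pol: "is_policy pol" for pol
  proof -
    have "(\<lambda>n. stop_mass pol n * c) sums terminal_exp pol Q"
      using terminal_exp_sums[OF pol, of Q] \<open>\<And>s a. s \<in> Sbot \<Longrightarrow> Q s a = c\<close>
      by (simp add: stop_mass_def sum_distrib_right)
    then show ?thesis using sums_mult2[OF stop_mass_sums[OF pol], of c] by (simp add: sums_unique2)
  qed
  have "terminal_exp sig Q = J P R rho Sbot sig"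
    using occupancy_identity[OF sig, of Q] fix_Q by simp
  then have "c \<le> J P R rho Sbot mu"
    using terminal_c[OF sig] opt sig by (simp add: is_optimal_def)
  then show thesis by (intro that[of Q]) (simp add: lagrangian_Q terminal_c[OF mu])
qed

end

section \<open>The saddle point\<close>

lemma saddle_point_value:
  fixes L :: "'x \<Rightarrow> 'y \<Rightarrow> real"
  assumes w: "w \<in> Y"
    and upper: "\<And>y. y \<in> Y \<Longrightarrow> L u y \<le> v" and lower: "\<And>x. v \<le> L x w"
  shows "(SUP y\<in>Y. ereal (L u y)) = (INF x. SUP y\<in>Y. ereal (L x y))"
    and "(INF x. ereal (L x w)) = (SUP y\<in>Y. INF x. ereal (L x y))"
    and "(INF x. SUP y\<in>Y. ereal (L x y)) = ereal v"
    and "(SUP y\<in>Y. INF x. ereal (L x y)) = ereal v"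
proof -
  have sup_u: "(SUP y\<in>Y. ereal (L u y)) = ereal v"
  proof (rule antisym)
    show "(SUP y\<in>Y. ereal (L u y)) \<le> ereal v" by (rule SUP_least) (simp add: upper)
    show "ereal v \<le> (SUP y\<in>Y. ereal (L u y))"
      using lower[of u] by (intro SUP_upper2[OF w]) simp
  qed
  have inf_w: "(INF x. ereal (L x w)) = ereal v"
  proof (rule antisym)
    show "(INF x. ereal (L x w)) \<le> ereal v"
      using upper[OF w] by (intro INF_lower2[of u]) simp_all
    show "ereal v \<le> (INF x. ereal (L x w))" by (rule INF_greatest) (simp add: lower)
  qed
  show minimax: "(INF x. SUP y\<in>Y. ereal (L x y)) = ereal v"
  proof (rule antisym)
    show "(INF x. SUP y\<in>Y. ereal (L x y)) \<le> ereal v"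
      using sup_u by (intro INF_lower2[of u]) simp_all
    show "ereal v \<le> (INF x. SUP y\<in>Y. ereal (L x y))"
      using lower by (intro INF_greatest SUP_upper2[OF w]) simp
  qed
  show maximin: "(SUP y\<in>Y. INF x. ereal (L x y)) = ereal v"
  proof (rule antisym)
    show "(SUP y\<in>Y. INF x. ereal (L x y)) \<le> ereal v"
      using upper by (intro SUP_least INF_lower2[of u]) simp_all
    show "ereal v \<le> (SUP y\<in>Y. INF x. ereal (L x y))"
      using inf_w by (intro SUP_upper2[OF w]) simp
  qed
  show "(SUP y\<in>Y. ereal (L u y)) = (INF x. SUP y\<in>Y. ereal (L x y))"
    using sup_u minimax by simp
  show "(INF x. ereal (L x w)) = (SUP y\<in>Y. INF x. ereal (L x y))"
    using inf_w maximin by simp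
qed

theorem mainTheorem6:
  fixes P :: "'s::finite \<Rightarrow> 'a::finite \<Rightarrow> 's \<Rightarrow> real"
    and R :: "'s \<Rightarrow> real" and rho :: "'s \<Rightarrow> real" and Sbot :: "'s set"
    and mu :: "'s \<Rightarrow> 'a \<Rightarrow> real"
  assumes "finite_ELP P R rho Sbot"
    and "is_optimal P R rho Sbot mu"
  shows "(\<exists>Q0. (SUP lam\<in>nonneg_multipliers. ereal (lagrangian P R rho Sbot mu Q0 lam))
                 = (INF Q. SUP lam\<in>nonneg_multipliers. ereal (lagrangian P R rho Sbot mu Q lam)))
       \<and> (\<exists>lam0\<in>nonneg_multipliers. (INF Q. ereal (lagrangian P R rho Sbot mu Q lam0))
                 = (SUP lam\<in>nonneg_multipliers. INF Q. ereal (lagrangian P R rho Sbot mu Q lam)))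
       \<and> (INF Q. SUP lam\<in>nonneg_multipliers. ereal (lagrangian P R rho Sbot mu Q lam))
            = ereal (J P R rho Sbot mu)
       \<and> (SUP lam\<in>nonneg_multipliers. INF Q. ereal (lagrangian P R rho Sbot mu Q lam))
            = ereal (J P R rho Sbot mu)"
proof -
  interpret finite_elp P R rho Sbot by unfold_locales (rule assms(1))
  have mu: "is_policy mu" using assms(2) by (simp add: is_optimal_def)
  obtain Q0 where primal: "\<And>lam. lagrangian P R rho Sbot mu Q0 lam \<le> J P R rho Sbot mu"
    using lagrangian_primal_bound[OF assms(2)] by blast
  have lam0: "occupancy mu \<in> nonneg_multipliers"
    by (simp add: nonneg_multipliers_def occupancy_nonneg[OF mu])
  note saddle = saddle_point_value[where L = "lagrangian P R rho Sbot mu" and u = Q0,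
      OF lam0 primal lagrangian_dual_bound[OF mu]]
  show ?thesis
  proof (intro conjI)
    show "\<exists>Q0. (SUP lam\<in>nonneg_multipliers. ereal (lagrangian P R rho Sbot mu Q0 lam))
        = (INF Q. SUP lam\<in>nonneg_multipliers. ereal (lagrangian P R rho Sbot mu Q lam))"
      by (rule exI[of _ Q0]) (rule saddle(1))
    show "\<exists>lam0\<in>nonneg_multipliers. (INF Q. ereal (lagrangian P R rho Sbot mu Q lam0))
        = (SUP lam\<in>nonneg_multipliers. INF Q. ereal (lagrangian P R rho Sbot mu Q lam))"
      by (rule bexI[where x = "occupancy mu"]) (rule saddle(2), rule lam0)
  qed (fact saddle(3), fact saddle(4))
qed

end
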